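(* Fix an integer $d\geq 3$ and $\rho<1$. There exists a constant $c=c(d,\rho)>0$ such that the following holds for all sufficiently large $n$. Let $G_n$ be a $d$-regular graph on $n$ vertices whose transition matrix has all eigenvalues other than $1$ of absolute value at most $\rho$, let $v\in G_n$, and let $G$ be obtained by adding a new vertex $v'$ and the edge $\{v,v'\}$. Let $(X_t),(Y_t)$ be independent simple random walks on $G$ with $X_0=u_1$, $Y_0=u_2$, where $u_1\neq v'$ and $u_2\neq v'$. Then $$\mathbb{P}_{u_1,u_2}\big(\exists\, t\leq n\wedge\tau^X_{v'}\wedge\tau^Y_{v'}\text{ such that }X_t=Y_t\big)\geq c.$$
   Context: $\tau^X_{v'}=\min\{t\geq1:X_t=v'\}$ and $\tau^Y_{v'}=\min\{t\geq 1:Y_t=v'\}$; $\mathbb{P}_{u_1,u_2}$ is the joint law of the two independent walks with the given starting points. *)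

theory Defs
  imports "HOL-Probability.Probability" "Jordan_Normal_Form.Char_Poly"
begin

text \<open>The graph G_n has vertex set {0..<n}; its adjacency relation is E (only its
restriction to {0..<n} matters).  It is a simple d-regular graph.\<close>

definition regular_graph :: "nat \<Rightarrow> nat \<Rightarrow> (nat \<Rightarrow> nat \<Rightarrow> bool) \<Rightarrow> bool" where
  "regular_graph n d E \<longleftrightarrow>
     (\<forall>x<n. \<forall>y<n. E x y \<longleftrightarrow> E y x) \<and> (\<forall>x<n. \<not> E x x) \<and>
     (\<forall>x<n. card {y. y < n \<and> E x y} = d)"

definition trans_mat :: "nat \<Rightarrow> nat \<Rightarrow> (nat \<Rightarrow> nat \<Rightarrow> bool) \<Rightarrow> complex mat" where
  "trans_mat n d E = mat n n (\<lambda>(i, j). if E i j then 1 / of_nat d else 0)"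

text \<open>All eigenvalues (counted with algebraic multiplicity) other than the
eigenvalue 1 (removed once) have absolute value at most rho.\<close>

definition spectral_bound :: "nat \<Rightarrow> nat \<Rightarrow> (nat \<Rightarrow> nat \<Rightarrow> bool) \<Rightarrow> real \<Rightarrow> bool" where
  "spectral_bound n d E \<rho> \<longleftrightarrow>
     (\<forall>z \<in> set_mset (proots (char_poly (trans_mat n d E)) - add_mset 1 0). cmod z \<le> \<rho>)"

text \<open>The graph G: G_n plus a new vertex v' = n joined only to v.\<close>

definition adjG :: "nat \<Rightarrow> (nat \<Rightarrow> nat \<Rightarrow> bool) \<Rightarrow> nat \<Rightarrow> nat \<Rightarrow> nat \<Rightarrow> bool" where
  "adjG n E v x y \<longleftrightarrow> (x < n \<and> y < n \<and> E x y) \<or> (x = v \<and> y = n) \<or> (x = n \<and> y = v)"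

text \<open>Law of the trajectory [X_0, ..., X_k] of simple random walk started at u,
with neighbourhoods given by adj.\<close>

fun walk :: "(nat \<Rightarrow> nat \<Rightarrow> bool) \<Rightarrow> nat \<Rightarrow> nat \<Rightarrow> nat list pmf" where
  "walk adj u 0 = return_pmf [u]"
| "walk adj u (Suc k) =
     walk adj u k \<bind> (\<lambda>xs. map_pmf (\<lambda>y. xs @ [y]) (pmf_of_set {y. adj (last xs) y}))"

text \<open>The event: there is t \<le> n with t \<le> tau^X_{v'} and t \<le> tau^Y_{v'}
(tau counting times \<ge> 1) and X_t = Y_t.\<close>

definition meet_event :: "nat \<Rightarrow> nat \<Rightarrow> (nat list \<times> nat list) set" where
  "meet_event n w = {(xs, ys). \<exists>t\<le>n.
      (\<forall>s. 1 \<le> s \<and> s < t \<longrightarrow> xs ! s \<noteq> w) \<and>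
      (\<forall>s. 1 \<le> s \<and> s < t \<longrightarrow> ys ! s \<noteq> w) \<and> xs ! t = ys ! t}"

definition meet_prob :: "nat \<Rightarrow> (nat \<Rightarrow> nat \<Rightarrow> bool) \<Rightarrow> nat \<Rightarrow> nat \<Rightarrow> nat \<Rightarrow> real" where
  "meet_prob n E v u1 u2 =
     measure_pmf.prob (pair_pmf (walk (adjG n E v) u1 n) (walk (adjG n E v) u2 n))
       (meet_event n n)"

end

theory Submission
  imports Defs "Jordan_Normal_Form.Schur_Decomposition"
begin

(* On paths that stay inside G_n, the law of simple random walk on G is
   the law of simple random walk on G_n (kernel P) discounted by alpha = d/(d+1)
   per visit to v, since v has one extra neighbour on G, the new vertex n.  Such
   paths never hit n, so a collision X_t = Y_t at a time t of the window
   [T, n], T = n div 2, lies in the meeting event.  With Z the number of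
   collisions in the window and N the number of visits to v of both walks, it
   therefore suffices to bound E_P[alpha^N [Z > 0]] from below.  A weighted
   Paley-Zygmund inequality reduces this to E[Z] >= 1/4, E[Z^2] = O(K) and
   E[N Z] = O(K), with K = 1/(1 - rho).  These moments follow from the mixing
   estimate |P^k(x,y) - 1/n| <= rho^k, which is derived from the spectral
   hypothesis via the trace of P^k and log-convexity of the diagonal of
   (P - J/n)^(2k). *)


section \<open>Inequalities for finite weighted sums\<close>

lemma sum_mult_delta:
  assumes "finite A" and "c \<in> A"
  shows "(\<Sum>z\<in>A. f z * (if z = c then 1 else 0)) = (f c :: real)"
proof -
  have "(\<Sum>z\<in>A. f z * (if z = c then 1 else 0)) = (\<Sum>z\<in>A. if z = c then f c else 0)"
    by (rule sum.cong) auto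
  then show ?thesis using assms by simp
qed

lemma sum_delta_mult:
  assumes "finite A" and "c \<in> A"
  shows "(\<Sum>z\<in>A. (if c = z then 1 else 0) * f z) = (f c :: real)"
proof -
  have "(\<Sum>z\<in>A. (if c = z then 1 else 0) * f z) = (\<Sum>z\<in>A. if c = z then f c else 0)"
    by (rule sum.cong) auto
  then show ?thesis using assms by simp
qed

lemma sum_sum_mult_delta:
  assumes "finite A" and "c \<in> A"
  shows "(\<Sum>w\<in>A. \<Sum>z\<in>B. g w z * (if w = c then 1 else 0)) = (\<Sum>z\<in>B. g c z :: real)"
  using sum_mult_delta[OF assms, of "\<lambda>w. \<Sum>z\<in>B. g w z"] by (simp add: sum_distrib_right)

lemma weighted_support_cauchy_schwarz:
  fixes \<mu> W Z :: "'a \<Rightarrow> real"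
  assumes "\<And>x. x \<in> A \<Longrightarrow> 0 \<le> \<mu> x" "\<And>x. x \<in> A \<Longrightarrow> 0 \<le> W x" "\<And>x. x \<in> A \<Longrightarrow> 0 \<le> Z x"
  shows "(\<Sum>x\<in>A. \<mu> x * W x * Z x)\<^sup>2
    \<le> (\<Sum>x\<in>A. \<mu> x * W x * (if Z x > 0 then 1 else 0)) * (\<Sum>x\<in>A. \<mu> x * W x * (Z x)\<^sup>2)"
proof -
  define f where "f x = sqrt (\<mu> x * W x * (if Z x > 0 then 1 else 0))" for x
  define g where "g x = sqrt (\<mu> x * W x) * Z x" for x
  have "(\<Sum>x\<in>A. \<mu> x * W x * Z x) = (\<Sum>x\<in>A. f x * g x)"
  proof (rule sum.cong[OF refl])
    fix x assume x: "x \<in> A"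
    have mw: "0 \<le> \<mu> x * W x" using assms x by simp
    show "\<mu> x * W x * Z x = f x * g x"
    proof (cases "Z x > 0")
      case True
      then show ?thesis using mw by (simp add: f_def g_def real_sqrt_mult[symmetric])
    next
      case False
      then have "Z x = 0" using assms x by force
      then show ?thesis by (simp add: f_def g_def)
    qed
  qed
  also have "(\<Sum>x\<in>A. f x * g x)\<^sup>2 \<le> (\<Sum>x\<in>A. (f x)\<^sup>2) * (\<Sum>x\<in>A. (g x)\<^sup>2)"
    by (rule Cauchy_Schwarz_ineq_sum)
  also have "(\<Sum>x\<in>A. (f x)\<^sup>2) = (\<Sum>x\<in>A. \<mu> x * W x * (if Z x > 0 then 1 else 0))"
    using assms by (intro sum.cong refl) (simp add: f_def)
  also have "(\<Sum>x\<in>A. (g x)\<^sup>2) = (\<Sum>x\<in>A. \<mu> x * W x * (Z x)\<^sup>2)"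
    using assms by (intro sum.cong refl) (simp add: g_def power_mult_distrib)
  finally show ?thesis .
qed

lemma weighted_jensen_powr:
  fixes \<mu> N Z :: "'a \<Rightarrow> real"
  assumes mu: "\<And>x. x \<in> A \<Longrightarrow> 0 \<le> \<mu> x" and Z: "\<And>x. x \<in> A \<Longrightarrow> 0 \<le> Z x"
    and al: "0 < \<alpha>" and S: "(\<Sum>x\<in>A. \<mu> x * Z x) > 0"
  shows "(\<Sum>x\<in>A. \<mu> x * Z x) * \<alpha> powr ((\<Sum>x\<in>A. \<mu> x * Z x * N x) / (\<Sum>x\<in>A. \<mu> x * Z x))
    \<le> (\<Sum>x\<in>A. \<mu> x * Z x * \<alpha> powr N x)"
proof -
  define c where "c = (\<Sum>x\<in>A. \<mu> x * Z x * N x) / (\<Sum>x\<in>A. \<mu> x * Z x)"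
  have tangent: "\<alpha> powr c * (1 + (N x - c) * ln \<alpha>) \<le> \<alpha> powr N x" for x
  proof -
    have "\<alpha> powr N x = \<alpha> powr c * exp ((N x - c) * ln \<alpha>)"
      using al by (simp add: powr_def exp_add[symmetric] algebra_simps)
    moreover have "1 + (N x - c) * ln \<alpha> \<le> exp ((N x - c) * ln \<alpha>)" by (rule exp_ge_add_one_self)
    ultimately show ?thesis using al by simp
  qed
  have "(\<Sum>x\<in>A. \<mu> x * Z x * (\<alpha> powr c * (1 + (N x - c) * ln \<alpha>))) \<le> (\<Sum>x\<in>A. \<mu> x * Z x * \<alpha> powr N x)"
    using mu Z tangent by (intro sum_mono mult_left_mono) auto
  moreover have "(\<Sum>x\<in>A. \<mu> x * Z x * (\<alpha> powr c * (1 + (N x - c) * ln \<alpha>)))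
      = \<alpha> powr c * ((\<Sum>x\<in>A. \<mu> x * Z x) + ln \<alpha> * ((\<Sum>x\<in>A. \<mu> x * Z x * N x) - c * (\<Sum>x\<in>A. \<mu> x * Z x)))"
    by (simp add: algebra_simps sum.distrib sum_subtractf sum_distrib_left sum_distrib_right)
  moreover have "(\<Sum>x\<in>A. \<mu> x * Z x * N x) - c * (\<Sum>x\<in>A. \<mu> x * Z x) = 0"
    using S by (simp add: c_def)
  ultimately show ?thesis by (simp add: c_def mult.commute)
qed

lemma weighted_paley_zygmund:
  fixes \<mu> Z N :: "'a \<Rightarrow> real"
  assumes mu: "\<And>x. x \<in> A \<Longrightarrow> 0 \<le> \<mu> x" and Z: "\<And>x. x \<in> A \<Longrightarrow> 0 \<le> Z x"
    and N: "\<And>x. x \<in> A \<Longrightarrow> 0 \<le> N x" and al: "0 < \<alpha>" "\<alpha> \<le> 1"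
    and m1: "0 < m1" "m1 \<le> (\<Sum>x\<in>A. \<mu> x * Z x)"
    and B: "(\<Sum>x\<in>A. \<mu> x * Z x * N x) \<le> B"
    and m2: "(\<Sum>x\<in>A. \<mu> x * (Z x)\<^sup>2) \<le> m2" and m2_pos: "0 < m2"
  shows "(m1 * \<alpha> powr (B / m1))\<^sup>2 / m2 \<le> (\<Sum>x\<in>A. \<mu> x * \<alpha> powr N x * (if Z x > 0 then 1 else 0))"
proof -
  let ?EZ = "\<Sum>x\<in>A. \<mu> x * Z x" and ?EZN = "\<Sum>x\<in>A. \<mu> x * Z x * N x"
  let ?L = "\<Sum>x\<in>A. \<mu> x * \<alpha> powr N x * Z x"
  let ?P = "\<Sum>x\<in>A. \<mu> x * \<alpha> powr N x * (if Z x > 0 then 1 else 0)"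
  have EZN0: "0 \<le> ?EZN" using mu Z N by (intro sum_nonneg mult_nonneg_nonneg) auto
  have ratio: "?EZN / ?EZ \<le> B / m1"
    using m1 B EZN0 by (intro frac_le) auto
  have "m1 * \<alpha> powr (B / m1) \<le> ?EZ * \<alpha> powr (?EZN / ?EZ)"
    using m1 al ratio by (intro mult_mono powr_mono') auto
  also have "\<dots> \<le> (\<Sum>x\<in>A. \<mu> x * Z x * \<alpha> powr N x)"
    using mu Z al m1 by (intro weighted_jensen_powr) auto
  also have "\<dots> = ?L" by (simp add: algebra_simps)
  finally have L: "m1 * \<alpha> powr (B / m1) \<le> ?L" .
  have L2: "(\<Sum>x\<in>A. \<mu> x * \<alpha> powr N x * (Z x)\<^sup>2) \<le> m2"
  proof -
    have "(\<Sum>x\<in>A. \<mu> x * \<alpha> powr N x * (Z x)\<^sup>2) \<le> (\<Sum>x\<in>A. \<mu> x * (Z x)\<^sup>2)"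
    proof (rule sum_mono)
      fix x assume x: "x \<in> A"
      have "\<alpha> powr N x * (\<mu> x * (Z x)\<^sup>2) \<le> \<mu> x * (Z x)\<^sup>2"
        using mu[OF x] N[OF x] al by (intro mult_left_le_one_le powr_le1) auto
      then show "\<mu> x * \<alpha> powr N x * (Z x)\<^sup>2 \<le> \<mu> x * (Z x)\<^sup>2"
        by (simp add: algebra_simps)
    qed
    then show ?thesis using m2 by simp
  qed
  have P0: "0 \<le> ?P" using mu by (intro sum_nonneg) auto
  have "(m1 * \<alpha> powr (B / m1))\<^sup>2 \<le> ?L\<^sup>2"
    using L m1 by (intro power_mono) auto
  also have "\<dots> \<le> ?P * (\<Sum>x\<in>A. \<mu> x * \<alpha> powr N x * (Z x)\<^sup>2)"
    using mu Z by (intro weighted_support_cauchy_schwarz) auto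
  also have "\<dots> \<le> ?P * m2" using L2 P0 by (rule mult_left_mono)
  finally show ?thesis using m2_pos by (simp add: pos_divide_le_eq)
qed

section \<open>Geometric sums over sets of times\<close>

lemma geometric_sum_inj:
  fixes \<rho> :: real
  assumes r0: "0 \<le> \<rho>" and r1: "\<rho> < 1" and inj: "inj_on h B" and fin: "finite B"
  shows "(\<Sum>t\<in>B. \<rho> ^ h t) \<le> 1 / (1 - \<rho>)"
proof -
  have "(\<Sum>t\<in>B. \<rho> ^ h t) = (\<Sum>k\<in>h ` B. \<rho> ^ k)" by (simp add: sum.reindex[OF inj])
  also have "\<dots> \<le> (\<Sum>k<Suc (Max (h ` B)). \<rho> ^ k)"
    using fin r0 by (intro sum_mono2) (auto simp: le_imp_less_Suc)
  also have "\<dots> = (1 - \<rho> ^ Suc (Max (h ` B))) / (1 - \<rho>)"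
    using r1 by (subst sum_gp_strict) simp
  also have "\<dots> \<le> 1 / (1 - \<rho>)" using r0 r1 by (simp add: divide_right_mono)
  finally show ?thesis .
qed

definition time_gap :: "nat \<Rightarrow> nat \<Rightarrow> nat" where
  "time_gap s t = (if s \<le> t then t - s else s - t)"

lemma geometric_sum_time_gap:
  fixes \<rho> :: real
  assumes r0: "0 \<le> \<rho>" and r1: "\<rho> < 1" and fin: "finite A"
  shows "(\<Sum>t\<in>A. \<rho> ^ time_gap s t) \<le> 2 / (1 - \<rho>)"
proof -
  let ?A1 = "{t\<in>A. s \<le> t}" and ?A2 = "{t\<in>A. \<not> s \<le> t}"
  have "A = ?A1 \<union> ?A2" by auto
  then have "(\<Sum>t\<in>A. \<rho> ^ time_gap s t) = (\<Sum>t\<in>?A1. \<rho> ^ time_gap s t) + (\<Sum>t\<in>?A2. \<rho> ^ time_gap s t)"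
    using fin by (metis (no_types, lifting) finite_Un sum.union_disjoint disjoint_iff mem_Collect_eq)
  also have "\<dots> = (\<Sum>t\<in>?A1. \<rho> ^ (t - s)) + (\<Sum>t\<in>?A2. \<rho> ^ (s - t))"
    by (intro arg_cong2[where f = "(+)"] sum.cong) (auto simp: time_gap_def)
  also have "(\<Sum>t\<in>?A1. \<rho> ^ (t - s)) \<le> 1 / (1 - \<rho>)"
    using fin by (intro geometric_sum_inj[OF r0 r1]) (auto simp: inj_on_def)
  also have "(\<Sum>t\<in>?A2. \<rho> ^ (s - t)) \<le> 1 / (1 - \<rho>)"
    using fin by (intro geometric_sum_inj[OF r0 r1]) (auto simp: inj_on_def)
  finally show ?thesis by simp
qed

section \<open>Log-convex sequences with geometric decay\<close>

text \<open>In a nonnegative log-convex sequence the ratios a(j+1)/a(j) never decrease,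
  so one ratio above r forces growth at least like r^i from then on.\<close>

lemma log_convex_growth:
  fixes a :: "nat \<Rightarrow> real"
  assumes lc: "\<And>j. (a (Suc j))\<^sup>2 \<le> a j * a (Suc (Suc j))"
    and pos: "0 < a j" and r: "0 < r" and ratio: "r * a j \<le> a (Suc j)"
  shows "a j * r ^ i \<le> a (j + i)"
proof -
  have grow: "0 < a (j + i) \<and> r * a (j + i) \<le> a (Suc (j + i))" for i
  proof (induction i)
    case 0 then show ?case using pos ratio by simp
  next
    case (Suc i)
    let ?x = "a (j + i)" and ?y = "a (Suc (j + i))" and ?z = "a (Suc (Suc (j + i)))"
    have ypos: "0 < ?y" using Suc r by (smt (verit) mult_pos_pos)
    have "r * ?x * ?y \<le> ?x * ?z"
      using lc[of "j + i"] Suc ypos by (smt (verit) mult_right_mono power2_eq_square)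
    then have "?x * (r * ?y) \<le> ?x * ?z" by (simp add: algebra_simps)
    then have "r * ?y \<le> ?z" using Suc by (simp add: mult_le_cancel_left_pos)
    then show ?case using ypos by simp
  qed
  show ?thesis
  proof (induction i)
    case 0 then show ?case by simp
  next
    case (Suc i)
    have "a j * r ^ Suc i = r * (a j * r ^ i)" by simp
    also have "\<dots> \<le> r * a (j + i)" using Suc r by (intro mult_left_mono) auto
    also have "\<dots> \<le> a (j + Suc i)" using grow[of i] by simp
    finally show ?case .
  qed
qed

text \<open>A nonnegative log-convex sequence that is O(q^j) decays with ratio q at
  every step: a larger ratio would persist and beat the bound C q^j.\<close>

lemma log_convex_ratio_bound:
  fixes a :: "nat \<Rightarrow> real"
  assumes nonneg: "\<And>j. 0 \<le> a j" and lc: "\<And>j. (a (Suc j))\<^sup>2 \<le> a j * a (Suc (Suc j))"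
    and upper: "\<And>j. a j \<le> C * q ^ j" and q: "0 \<le> q"
  shows "a (Suc j) \<le> q * a j"
proof (rule ccontr)
  assume "\<not> a (Suc j) \<le> q * a j"
  then have gt: "q * a j < a (Suc j)" by simp
  have apos: "0 < a j"
  proof (rule ccontr)
    assume "\<not> 0 < a j"
    then have "a j = 0" using nonneg[of j] by simp
    then have "(a (Suc j))\<^sup>2 \<le> 0" using lc[of j] by simp
    then show False using gt \<open>a j = 0\<close> by simp
  qed
  define r where "r = a (Suc j) / a j"
  have rq: "q < r" using gt apos unfolding r_def by (simp add: field_simps)
  have rpos: "0 < r" using rq q by simp
  have bound: "a j * r ^ i \<le> C * q ^ j * q ^ i" for i
    using log_convex_growth[OF lc apos rpos, of i] upper[of "j + i"] apos
    by (simp add: r_def power_add mult.assoc)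
  show False
  proof (cases "q = 0")
    case True
    then show False using bound[of 1] mult_pos_pos[OF apos rpos] by simp
  next
    case False
    then have qpos: "0 < q" using q by simp
    obtain i where i: "C * q ^ j / a j < (r / q) ^ i"
      using real_arch_pow[of "r / q"] rq qpos by auto
    have "(r / q) ^ i * a j * q ^ i \<le> C * q ^ j * q ^ i"
      using bound[of i] qpos by (simp add: power_divide field_simps)
    then have "(r / q) ^ i * a j \<le> C * q ^ j"
      using qpos by (simp add: mult_le_cancel_right_pos)
    then show False using i apos by (simp add: pos_divide_less_eq)
  qed
qed

lemma log_convex_geometric_decay:
  fixes a :: "nat \<Rightarrow> real"
  assumes nonneg: "\<And>j. 0 \<le> a j" and lc: "\<And>j. (a (Suc j))\<^sup>2 \<le> a j * a (Suc (Suc j))"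
    and upper: "\<And>j. a j \<le> C * q ^ j" and q: "0 \<le> q"
  shows "a k \<le> a 0 * q ^ k"
proof (induction k)
  case 0 then show ?case by simp
next
  case (Suc k)
  have "a (Suc k) \<le> q * a k" by (rule log_convex_ratio_bound[OF nonneg lc upper q])
  also have "\<dots> \<le> q * (a 0 * q ^ k)" using Suc q by (intro mult_left_mono) auto
  finally show ?case by (simp add: algebra_simps)
qed

section \<open>Powers of a symmetric stochastic kernel\<close>

primrec kernel_pow :: "nat \<Rightarrow> (nat \<Rightarrow> nat \<Rightarrow> real) \<Rightarrow> nat \<Rightarrow> nat \<Rightarrow> nat \<Rightarrow> real" where
  "kernel_pow n P 0 x y = (if x = y then 1 else 0)"
| "kernel_pow n P (Suc k) x y = (\<Sum>w<n. kernel_pow n P k x w * P w y)"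

locale sym_stochastic =
  fixes n :: nat and P :: "nat \<Rightarrow> nat \<Rightarrow> real"
  assumes npos: "0 < n"
    and P_nonneg: "\<And>x y. 0 \<le> P x y"
    and P_sym: "\<And>x y. x < n \<Longrightarrow> y < n \<Longrightarrow> P x y = P y x"
    and P_row: "\<And>x. x < n \<Longrightarrow> (\<Sum>y<n. P x y) = 1"
begin

abbreviation "p \<equiv> kernel_pow n P"

lemma p_nonneg: "0 \<le> p k x y"
  by (induction k arbitrary: y) (auto intro!: sum_nonneg mult_nonneg_nonneg P_nonneg)

lemma p_add: "x < n \<Longrightarrow> y < n \<Longrightarrow> p (a + b) x y = (\<Sum>w<n. p a x w * p b w y)"
proof (induction b arbitrary: y)
  case 0
  then show ?case using sum_mult_delta[of "{..<n}" y "p a x"] by simp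
next
  case (Suc b)
  have "p (a + Suc b) x y = (\<Sum>w<n. (\<Sum>w'<n. p a x w' * p b w' w) * P w y)"
    using Suc by simp
  also have "\<dots> = (\<Sum>w<n. \<Sum>w'<n. p a x w' * p b w' w * P w y)"
    by (simp add: sum_distrib_right)
  also have "\<dots> = (\<Sum>w'<n. \<Sum>w<n. p a x w' * p b w' w * P w y)"
    by (rule sum.swap)
  also have "\<dots> = (\<Sum>w'<n. p a x w' * p (Suc b) w' y)"
    by (simp add: sum_distrib_left mult.assoc)
  finally show ?case .
qed

lemma p_row: "x < n \<Longrightarrow> (\<Sum>y<n. p k x y) = 1"
proof (induction k)
  case 0
  then show ?case by simp
next
  case (Suc k)
  have "(\<Sum>y<n. p (Suc k) x y) = (\<Sum>y<n. \<Sum>w<n. p k x w * P w y)" by simp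
  also have "\<dots> = (\<Sum>w<n. \<Sum>y<n. p k x w * P w y)" by (rule sum.swap)
  also have "\<dots> = (\<Sum>w<n. p k x w * (\<Sum>y<n. P w y))" by (simp add: sum_distrib_left)
  also have "\<dots> = (\<Sum>w<n. p k x w)" by (simp add: P_row)
  finally show ?case using Suc by simp
qed

lemma p_sym: "x < n \<Longrightarrow> y < n \<Longrightarrow> p k x y = p k y x"
proof (induction k arbitrary: x y)
  case 0
  then show ?case by simp
next
  case (Suc k)
  have one: "p 1 y w = P y w" for w
  proof -
    have "p 1 y w = (\<Sum>w'<n. (if y = w' then 1 else 0) * P w' w)" by (simp add: One_nat_def)
    also have "\<dots> = P y w" using Suc.prems by (intro sum_delta_mult) auto
    finally show ?thesis .
  qed
  have "p (Suc k) y x = p (1 + k) y x" by simp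
  also have "\<dots> = (\<Sum>w<n. p 1 y w * p k w x)" using Suc by (intro p_add) auto
  also have "\<dots> = (\<Sum>w<n. p k x w * P w y)"
  proof (rule sum.cong[OF refl])
    fix w assume "w \<in> {..<n}"
    then have "p 1 y w = P w y" "p k w x = p k x w"
      using one[of w] Suc.IH[of w x] Suc.prems P_sym[of y w] by auto
    then show "p 1 y w * p k w x = p k x w * P w y" by (simp only: mult.commute)
  qed
  finally show ?case by simp
qed

text \<open>Entries of (P - J/n)^k, J the all-ones matrix; for k \<ge> 1 this is P^k - J/n,
  which measures the distance of the k-step law from uniform.\<close>

definition centred_pow :: "nat \<Rightarrow> nat \<Rightarrow> nat \<Rightarrow> real" where
  "centred_pow k x y = (if k = 0 then (if x = y then 1 else 0) else p k x y - 1 / n)"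

lemma centred_pow_sym: "x < n \<Longrightarrow> y < n \<Longrightarrow> centred_pow k x y = centred_pow k y x"
  by (simp add: centred_pow_def p_sym)

text \<open>The centred powers multiply like matrix powers, because P and J/n commute
  and J/n is idempotent.\<close>

lemma centred_pow_add:
  assumes x: "x < n" and y: "y < n"
  shows "centred_pow (a + b) x y = (\<Sum>w<n. centred_pow a x w * centred_pow b w y)"
proof (cases "a = 0 \<or> b = 0")
  case True
  show ?thesis
  proof (cases "a = 0")
    case True
    then show ?thesis using sum_delta_mult[of "{..<n}" x "\<lambda>w. centred_pow b w y"] x
      by (simp add: centred_pow_def)
  next
    case False
    then have "b = 0" using \<open>a = 0 \<or> b = 0\<close> by simp
    then show ?thesis using sum_mult_delta[of "{..<n}" y "centred_pow a x"] y
      by (simp add: centred_pow_def)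
  qed
next
  case False
  have "(\<Sum>w<n. p b w y) = (\<Sum>w<n. p b y w)"
    using y by (intro sum.cong refl) (metis lessThan_iff p_sym)
  then have col: "(\<Sum>w<n. p b w y) = 1" using p_row[OF y, of b] by simp
  have "(\<Sum>w<n. centred_pow a x w * centred_pow b w y)
      = (\<Sum>w<n. p a x w * p b w y) - (\<Sum>w<n. p a x w) / n - (\<Sum>w<n. p b w y) / n
        + (\<Sum>w<n. 1 / (real n * n))"
    using False by (simp add: centred_pow_def algebra_simps sum_subtractf sum.distrib sum_divide_distrib)
  also have "\<dots> = p (a + b) x y - 1 / n"
    using x y npos col by (simp add: p_add p_row field_simps)
  finally show ?thesis using False by (simp add: centred_pow_def)
qed

lemma centred_pow_square:
  assumes x: "x < n"
  shows "centred_pow (2 * k) x x = (\<Sum>w<n. (centred_pow k x w)\<^sup>2)"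
proof -
  have "centred_pow (k + k) x x = (\<Sum>w<n. centred_pow k x w * centred_pow k w x)"
    by (rule centred_pow_add[OF x x])
  also have "\<dots> = (\<Sum>w<n. (centred_pow k x w)\<^sup>2)"
    using x by (intro sum.cong refl) (metis lessThan_iff centred_pow_sym power2_eq_square)
  finally show ?thesis by (simp add: mult_2)
qed

lemma centred_pow_square_nonneg: "x < n \<Longrightarrow> 0 \<le> centred_pow (2 * k) x x"
  by (simp add: centred_pow_square sum_nonneg)

text \<open>Cauchy-Schwarz makes the diagonal sequence j \<mapsto> centred_pow (2j) x x log-convex.\<close>

lemma centred_pow_log_convex:
  assumes x: "x < n"
  shows "(centred_pow (2 * Suc j) x x)\<^sup>2 \<le> centred_pow (2 * j) x x * centred_pow (2 * Suc (Suc j)) x x"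
proof -
  have "centred_pow (2 * Suc j) x x = centred_pow (j + Suc (Suc j)) x x" by (simp add: mult_2)
  also have "\<dots> = (\<Sum>w<n. centred_pow j x w * centred_pow (Suc (Suc j)) w x)"
    by (rule centred_pow_add[OF x x])
  also have "\<dots> = (\<Sum>w<n. centred_pow j x w * centred_pow (Suc (Suc j)) x w)"
    using x by (intro sum.cong refl) (metis lessThan_iff centred_pow_sym)
  finally have e: "centred_pow (2 * Suc j) x x
      = (\<Sum>w<n. centred_pow j x w * centred_pow (Suc (Suc j)) x w)" .
  show ?thesis
    unfolding e centred_pow_square[OF x, of j] centred_pow_square[OF x, of "Suc (Suc j)"]
    by (rule Cauchy_Schwarz_ineq_sum)
qed

text \<open>If the trace of P^k exceeds 1 by at most (n-1) rho^k (the contribution of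
  the nontrivial eigenvalues), every diagonal entry of (P - J/n)^(2k) is at most
  rho^(2k): the diagonal sequence is log-convex and its sum over x is O(rho^(2k)).\<close>

lemma centred_pow_diag_bound:
  assumes r0: "0 \<le> \<rho>"
    and tr: "\<And>k. k \<ge> 1 \<Longrightarrow> (\<Sum>x<n. p k x x) - 1 \<le> real (n - 1) * \<rho> ^ k"
    and x: "x < n"
  shows "centred_pow (2 * k) x x \<le> \<rho> ^ (2 * k)"
proof -
  have trace: "(\<Sum>y<n. centred_pow (2 * j) y y) \<le> n * (\<rho>\<^sup>2) ^ j" for j
  proof (cases "j = 0")
    case True then show ?thesis by (simp add: centred_pow_def)
  next
    case False
    have "(\<Sum>y<n. centred_pow (2 * j) y y) = (\<Sum>y<n. p (2 * j) y y) - 1"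
      using False npos by (simp add: centred_pow_def sum_subtractf)
    also have "\<dots> \<le> real (n - 1) * (\<rho>\<^sup>2) ^ j" using tr[of "2 * j"] False by (simp add: power_mult)
    also have "\<dots> \<le> n * (\<rho>\<^sup>2) ^ j" by (intro mult_right_mono) auto
    finally show ?thesis .
  qed
  have upper: "centred_pow (2 * j) x x \<le> n * (\<rho>\<^sup>2) ^ j" for j
  proof -
    have "centred_pow (2 * j) x x \<le> (\<Sum>y<n. centred_pow (2 * j) y y)"
      using x by (intro member_le_sum centred_pow_square_nonneg) auto
    then show ?thesis using trace[of j] by simp
  qed
  have "centred_pow (2 * k) x x \<le> centred_pow (2 * 0) x x * (\<rho>\<^sup>2) ^ k"
    by (rule log_convex_geometric_decay[where a = "\<lambda>j. centred_pow (2 * j) x x",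
          OF centred_pow_square_nonneg[OF x] centred_pow_log_convex[OF x] upper]) simp
  then show ?thesis by (simp add: centred_pow_def power_mult)
qed

lemma p_close_to_uniform:
  assumes r0: "0 \<le> \<rho>"
    and tr: "\<And>k. k \<ge> 1 \<Longrightarrow> (\<Sum>x<n. p k x x) - 1 \<le> real (n - 1) * \<rho> ^ k"
    and x: "x < n" and y: "y < n" and k: "k \<ge> 1"
  shows "\<bar>p k x y - 1 / n\<bar> \<le> \<rho> ^ k"
proof -
  define a where "a = k div 2"
  define b where "b = k - a"
  have k_ab: "k = a + b" unfolding a_def b_def by simp
  have "centred_pow k x y = (\<Sum>w<n. centred_pow a x w * centred_pow b w y)"
    unfolding k_ab by (rule centred_pow_add[OF x y])
  also have "\<dots> = (\<Sum>w<n. centred_pow a x w * centred_pow b y w)"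
    using y by (intro sum.cong refl) (metis lessThan_iff centred_pow_sym)
  finally have e: "centred_pow k x y = (\<Sum>w<n. centred_pow a x w * centred_pow b y w)" .
  have "(centred_pow k x y)\<^sup>2 \<le> (\<Sum>w<n. (centred_pow a x w)\<^sup>2) * (\<Sum>w<n. (centred_pow b y w)\<^sup>2)"
    unfolding e by (rule Cauchy_Schwarz_ineq_sum)
  also have "\<dots> = centred_pow (2 * a) x x * centred_pow (2 * b) y y" by (simp add: centred_pow_square x y)
  also have "\<dots> \<le> \<rho> ^ (2 * a) * \<rho> ^ (2 * b)"
    by (intro mult_mono centred_pow_diag_bound[OF r0 tr] centred_pow_square_nonneg x y) auto
  also have "\<dots> = (\<rho> ^ k)\<^sup>2" by (simp add: k_ab power_add power_mult_distrib power_mult[symmetric] mult.commute)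
  finally have "\<bar>centred_pow k x y\<bar> \<le> \<bar>\<rho> ^ k\<bar>" by (simp only: abs_le_square_iff)
  then show ?thesis using r0 k by (simp add: centred_pow_def)
qed

end

section \<open>Traces of matrix powers and the spectral hypothesis\<close>

definition mat_trace :: "complex mat \<Rightarrow> complex" where
  "mat_trace M = (\<Sum>i<dim_row M. M $$ (i, i))"

lemma mat_trace_comm:
  assumes X: "X \<in> carrier_mat n m" and Y: "Y \<in> carrier_mat m n"
  shows "mat_trace (X * Y) = mat_trace (Y * X)"
proof -
  have "mat_trace (X * Y) = (\<Sum>i<n. \<Sum>l<m. X $$ (i, l) * Y $$ (l, i))"
    using X Y by (simp add: mat_trace_def scalar_prod_def lessThan_atLeast0)
  also have "\<dots> = (\<Sum>l<m. \<Sum>i<n. Y $$ (l, i) * X $$ (i, l))"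
    by (subst sum.swap) (simp add: mult.commute)
  also have "\<dots> = mat_trace (Y * X)"
    using X Y by (simp add: mat_trace_def scalar_prod_def lessThan_atLeast0)
  finally show ?thesis .
qed

lemma upper_triangular_pow:
  assumes B: "B \<in> carrier_mat n n" and ut: "upper_triangular B"
  shows "upper_triangular (B ^\<^sub>m k) \<and> (\<forall>i<n. (B ^\<^sub>m k) $$ (i, i) = (B $$ (i, i)) ^ k)"
proof (induction k)
  case 0
  then show ?case using B by auto
next
  case (Suc k)
  let ?C = "B ^\<^sub>m k"
  have C: "?C \<in> carrier_mat n n" using B by simp
  have uC: "\<And>i j. i < n \<Longrightarrow> j < i \<Longrightarrow> ?C $$ (i, j) = 0"
    using Suc C unfolding upper_triangular_def by auto
  have uB: "\<And>i j. i < n \<Longrightarrow> j < i \<Longrightarrow> B $$ (i, j) = 0"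
    using ut B unfolding upper_triangular_def by auto
  have prod: "(?C * B) $$ (i, j) = (\<Sum>l<n. ?C $$ (i, l) * B $$ (l, j))" if "i < n" "j < n" for i j
    using that C B by (simp add: scalar_prod_def lessThan_atLeast0)
  have "upper_triangular (?C * B)"
    unfolding upper_triangular_def
  proof (intro allI impI)
    fix i j assume ij: "i < dim_row (?C * B)" "j < i"
    then have i: "i < n" using C B by simp
    have "(\<Sum>l<n. ?C $$ (i, l) * B $$ (l, j)) = 0"
    proof (rule sum.neutral, intro ballI)
      fix l assume "l \<in> {..<n}"
      then show "?C $$ (i, l) * B $$ (l, j) = 0"
        using uC[of i l] uB[of l j] ij i by (cases "l < i") auto
    qed
    then show "(?C * B) $$ (i, j) = 0" using prod[of i j] i ij by simp
  qed
  moreover have "(?C * B) $$ (i, i) = (B $$ (i, i)) ^ Suc k" if i: "i < n" for i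
  proof -
    have "(\<Sum>l<n. ?C $$ (i, l) * B $$ (l, i)) = (\<Sum>l<n. if l = i then ?C $$ (i, i) * B $$ (i, i) else 0)"
    proof (rule sum.cong[OF refl])
      fix l assume "l \<in> {..<n}"
      then show "?C $$ (i, l) * B $$ (l, i) = (if l = i then ?C $$ (i, i) * B $$ (i, i) else 0)"
        using uC[of i l] uB[of l i] i by (cases "l < i"; cases "l = i") auto
    qed
    also have "\<dots> = ?C $$ (i, i) * B $$ (i, i)" using i by simp
    finally show ?thesis using prod[OF i i] Suc i by (simp del: power_Suc add: power_Suc2)
  qed
  ultimately show ?case by simp
qed

text \<open>The trace of A^k is the k-th power sum of the eigenvalues of A, listed with
  algebraic multiplicity (via a Schur decomposition).\<close>

lemma mat_trace_pow_eigenvalues: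
  assumes A: "A \<in> carrier_mat n n" and cp: "char_poly A = (\<Prod>a\<leftarrow>as. [:- a, 1:])"
  shows "mat_trace (A ^\<^sub>m k) = (\<Sum>a\<leftarrow>as. a ^ k)"
proof -
  obtain B Pm Q where sd: "schur_decomposition A as = (B, Pm, Q)"
    by (cases "schur_decomposition A as") auto
  from schur_decomposition[OF A cp sd]
  have sim: "similar_mat_wit A B Pm Q" and ut: "upper_triangular B" and dg: "diag_mat B = as" by auto
  have dimA: "dim_row A = n" using A by simp
  note sD = similar_mat_witD[OF dimA[symmetric] sim]
  have dimAk: "dim_row (A ^\<^sub>m k) = n" using A by simp
  note sDk = similar_mat_witD[OF dimAk[symmetric] similar_mat_wit_pow[OF sim, of k]]
  have Bk: "B ^\<^sub>m k \<in> carrier_mat n n" using sD by simp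
  have len: "length as = n" using dg sD by (auto simp: diag_mat_def)
  have "mat_trace (A ^\<^sub>m k) = mat_trace (Pm * (B ^\<^sub>m k * Q))"
    using sDk sD Bk by (simp add: assoc_mult_mat[of Pm n n _ n Q n])
  also have "\<dots> = mat_trace ((B ^\<^sub>m k * Q) * Pm)"
    using sD Bk by (intro mat_trace_comm[of _ n n]) auto
  also have "\<dots> = mat_trace (B ^\<^sub>m k)"
    using sD Bk by (simp add: assoc_mult_mat[of _ n n Q n Pm n])
  also have "\<dots> = (\<Sum>i<n. (B $$ (i, i)) ^ k)"
    using upper_triangular_pow[of B n k] sD ut Bk by (simp add: mat_trace_def)
  also have "\<dots> = (\<Sum>i<n. (as ! i) ^ k)"
    using dg sD by (intro sum.cong refl) (auto simp: diag_mat_def)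
  also have "\<dots> = (\<Sum>a\<leftarrow>as. a ^ k)"
    using len by (simp add: sum_list_sum_nth lessThan_atLeast0)
  finally show ?thesis .
qed

lemma proots_linear_factors: "proots (\<Prod>a\<leftarrow>as. [:- a, 1:]) = mset (as :: complex list)"
proof (induction as)
  case Nil
  then show ?case by simp
next
  case (Cons a as)
  have nz: "(\<Prod>a\<leftarrow>as. [:- a, 1:]) \<noteq> (0 :: complex poly)"
    using prod_list_zero_iff[of "map (\<lambda>a. [:- a, 1:]) as"] by auto
  have "proots (\<Prod>a\<leftarrow>a # as. [:- a, 1:]) = proots [:- a, 1:] + proots (\<Prod>a\<leftarrow>as. [:- a, 1:])"
    using proots_mult[of "[:- a, 1:]" "\<Prod>a\<leftarrow>as. [:- a, 1:]"] nz by simp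
  then show ?case using Cons by simp
qed

lemma row_stochastic_eigenvalue_one:
  fixes A :: "complex mat"
  assumes A: "A \<in> carrier_mat n n" and n: "0 < n"
    and rows: "\<And>i. i < n \<Longrightarrow> (\<Sum>j<n. A $$ (i, j)) = 1"
    and cp: "char_poly A = (\<Prod>a\<leftarrow>as. [:- a, 1:])"
  shows "1 \<in> set as"
proof -
  define v :: "complex vec" where "v = vec n (\<lambda>_. 1)"
  have Av: "A *\<^sub>v v = 1 \<cdot>\<^sub>v v"
  proof (rule eq_vecI)
    fix i assume "i < dim_vec (1 \<cdot>\<^sub>v v)"
    then have i: "i < n" by (simp add: v_def)
    have "(A *\<^sub>v v) $ i = (\<Sum>j<n. A $$ (i, j))"
      using A i by (simp add: scalar_prod_def lessThan_atLeast0 v_def)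
    then show "(A *\<^sub>v v) $ i = (1 \<cdot>\<^sub>v v) $ i" using i rows by (simp add: v_def)
  qed (use A in \<open>simp add: v_def\<close>)
  have "v \<noteq> 0\<^sub>v n"
  proof
    assume "v = 0\<^sub>v n"
    then have "v $ 0 = 0" using n by simp
    then show False using n by (simp add: v_def)
  qed
  then have "eigenvector A v 1"
    unfolding eigenvector_def using Av A by (auto simp: v_def)
  then have "eigenvalue A 1" unfolding eigenvalue_def by blast
  then have "poly (char_poly A) 1 = 0" using eigenvalue_root_char_poly[OF A] by simp
  moreover have "poly (\<Prod>a\<leftarrow>as. [:- a, 1:]) 1 = (\<Prod>a\<leftarrow>as. 1 - a)"
    by (induction as) (auto simp: algebra_simps)
  ultimately have "(\<Prod>a\<leftarrow>as. 1 - a) = (0::complex)" using cp by simp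
  then show ?thesis by (induction as) auto
qed

lemma sum_pow_mset_bound:
  assumes "\<forall>z\<in>#R. cmod z \<le> \<rho>"
  shows "cmod (\<Sum>z\<in>#R. z ^ k) \<le> real (size R) * \<rho> ^ k"
  using assms
proof (induction R)
  case empty
  then show ?case by simp
next
  case (add z R)
  have "cmod (z ^ k) \<le> \<rho> ^ k"
    using add.prems by (simp add: norm_power power_mono)
  moreover have "cmod (\<Sum>z\<in>#R. z ^ k) \<le> real (size R) * \<rho> ^ k"
    using add by simp
  ultimately show ?case
    using norm_triangle_ineq[of "z ^ k" "\<Sum>z\<in>#R. z ^ k"] by (simp add: algebra_simps)
qed

lemma trace_pow_bound:
  fixes A :: "complex mat"
  assumes A: "A \<in> carrier_mat n n" and n: "0 < n"
    and rows: "\<And>i. i < n \<Longrightarrow> (\<Sum>j<n. A $$ (i, j)) = 1"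
    and spec: "\<forall>z \<in> set_mset (proots (char_poly A) - add_mset 1 0). cmod z \<le> \<rho>"
  shows "Re (mat_trace (A ^\<^sub>m k)) - 1 \<le> real (n - 1) * \<rho> ^ k"
proof -
  obtain as where cp: "char_poly A = (\<Prod>a\<leftarrow>as. [:- a, 1:])" and len: "length as = n"
    using char_poly_factorized[OF A] by blast
  define R where "R = mset as - {#1#}"
  have masR: "mset as = add_mset 1 R"
    unfolding R_def using row_stochastic_eigenvalue_one[OF A n rows cp] by (simp add: insert_DiffM)
  have Rb: "\<forall>z\<in>#R. cmod z \<le> \<rho>"
    using spec unfolding cp proots_linear_factors R_def by simp
  have "mat_trace (A ^\<^sub>m k) = (\<Sum>a\<in>#mset as. a ^ k)"
    unfolding mat_trace_pow_eigenvalues[OF A cp] by (metis mset_map sum_mset_sum_list)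
  also have "\<dots> = 1 + (\<Sum>z\<in>#R. z ^ k)" unfolding masR by simp
  finally have "Re (mat_trace (A ^\<^sub>m k)) - 1 = Re (\<Sum>z\<in>#R. z ^ k)" by simp
  also have "\<dots> \<le> cmod (\<Sum>z\<in>#R. z ^ k)" by (rule complex_Re_le_cmod)
  also have "\<dots> \<le> real (size R) * \<rho> ^ k" by (rule sum_pow_mset_bound[OF Rb])
  finally show ?thesis using arg_cong[OF masR, of size] len by simp
qed

section \<open>Simple random walk on the regular graph G_n\<close>

definition srw :: "nat \<Rightarrow> (nat \<Rightarrow> nat \<Rightarrow> bool) \<Rightarrow> nat \<Rightarrow> nat \<Rightarrow> real" where
  "srw d E x y = (if E x y then 1 / real d else 0)"

lemma srw_row:
  assumes reg: "regular_graph n d E" and d: "0 < d" and x: "x < n"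
  shows "(\<Sum>y<n. srw d E x y) = 1"
proof -
  have "(\<Sum>y<n. srw d E x y) = (\<Sum>y\<in>{y\<in>{..<n}. E x y}. 1 / real d)"
    unfolding srw_def by (rule sum.inter_filter[symmetric]) simp
  also have "{y\<in>{..<n}. E x y} = {y. y < n \<and> E x y}" by auto
  also have "card \<dots> = d" using reg x unfolding regular_graph_def by auto
  then have "(\<Sum>y\<in>{y. y < n \<and> E x y}. 1 / real d) = 1" using d by simp
  finally show ?thesis .
qed

lemma srw_sym_stochastic:
  assumes reg: "regular_graph n d E" and d: "0 < d" and n: "0 < n"
  shows "sym_stochastic n (srw d E)"
  using assms srw_row[OF reg d]
  by unfold_locales (auto simp: srw_def regular_graph_def)

lemma trans_mat_entry:
  "i < n \<Longrightarrow> j < n \<Longrightarrow> trans_mat n d E $$ (i, j) = complex_of_real (srw d E i j)"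
  by (simp add: trans_mat_def srw_def)

lemma trans_mat_pow_entry:
  assumes i: "i < n" and j: "j < n"
  shows "(trans_mat n d E ^\<^sub>m k) $$ (i, j) = complex_of_real (kernel_pow n (srw d E) k i j)"
  using j
proof (induction k arbitrary: j)
  case 0
  then show ?case using i by (simp add: trans_mat_def)
next
  case (Suc k)
  let ?A = "trans_mat n d E"
  have C: "?A ^\<^sub>m k \<in> carrier_mat n n" "?A \<in> carrier_mat n n" by (auto simp: trans_mat_def)
  have "(?A ^\<^sub>m Suc k) $$ (i, j) = (\<Sum>l<n. (?A ^\<^sub>m k) $$ (i, l) * ?A $$ (l, j))"
    using C i Suc.prems by (simp add: scalar_prod_def lessThan_atLeast0)
  also have "\<dots> = (\<Sum>l<n. complex_of_real (kernel_pow n (srw d E) k i l * srw d E l j))"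
    using Suc by (intro sum.cong refl) (simp add: trans_mat_entry)
  also have "\<dots> = complex_of_real (kernel_pow n (srw d E) (Suc k) i j)" by simp
  finally show ?case .
qed

lemma srw_close_to_uniform:
  assumes reg: "regular_graph n d E" and d: "0 < d" and n: "0 < n"
    and sb: "spectral_bound n d E \<rho>" and r0: "0 \<le> \<rho>"
    and x: "x < n" and y: "y < n" and k: "1 \<le> k"
  shows "\<bar>kernel_pow n (srw d E) k x y - 1 / n\<bar> \<le> \<rho> ^ k"
proof -
  interpret sym_stochastic n "srw d E" by (rule srw_sym_stochastic[OF reg d n])
  let ?A = "trans_mat n d E"
  have A: "?A \<in> carrier_mat n n" by (simp add: trans_mat_def)
  have rows: "(\<Sum>j<n. ?A $$ (i, j)) = 1" if i: "i < n" for i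
  proof -
    have "(\<Sum>j<n. ?A $$ (i, j)) = (\<Sum>j<n. complex_of_real (srw d E i j))"
      using i by (intro sum.cong refl) (simp add: trans_mat_entry)
    also have "\<dots> = 1" using srw_row[OF reg d i] by (simp flip: of_real_sum)
    finally show ?thesis .
  qed
  have "(\<Sum>x<n. p j x x) - 1 \<le> real (n - 1) * \<rho> ^ j" for j
  proof -
    have "mat_trace (?A ^\<^sub>m j) = (\<Sum>x<n. complex_of_real (p j x x))"
      unfolding mat_trace_def using A by (intro sum.cong) (auto simp: trans_mat_pow_entry)
    then have "Re (mat_trace (?A ^\<^sub>m j)) = (\<Sum>x<n. p j x x)" by (simp flip: of_real_sum)
    then show ?thesis
      using trace_pow_bound[OF A n rows, of \<rho> j] sb by (simp add: spectral_bound_def)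
  qed
  then show ?thesis by (rule p_close_to_uniform[OF r0 _ x y k])
qed

section \<open>Sums over paths\<close>

definition paths :: "nat \<Rightarrow> nat \<Rightarrow> nat list set" where
  "paths n m = {xs. set xs \<subseteq> {..<n} \<and> length xs = Suc m}"

definition path_prob :: "(nat \<Rightarrow> nat \<Rightarrow> real) \<Rightarrow> nat \<Rightarrow> nat list \<Rightarrow> real" where
  "path_prob P u xs = (if xs ! 0 = u then (\<Prod>i<length xs - 1. P (xs ! i) (xs ! Suc i)) else 0)"

lemma finite_paths: "finite (paths n m)"
  unfolding paths_def by (rule finite_lists_length_eq) simp

lemma paths_nth:
  assumes "xs \<in> paths n m" "i \<le> m"
  shows "xs ! i < n"
proof -
  have "xs ! i \<in> set xs" using assms by (simp add: paths_def)
  then show ?thesis using assms(1) by (auto simp: paths_def)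
qed

lemma paths_0: "paths n 0 = (\<lambda>x. [x]) ` {..<n}"
proof (intro equalityI subsetI)
  fix xs assume xs: "xs \<in> paths n 0"
  then obtain x where "xs = [x]" by (auto simp: paths_def length_Suc_conv)
  then show "xs \<in> (\<lambda>x. [x]) ` {..<n}" using xs by (simp add: paths_def)
qed (auto simp: paths_def)

lemma paths_Suc: "paths n (Suc m) = (\<lambda>(xs, y). xs @ [y]) ` (paths n m \<times> {..<n})"
proof
  show "paths n (Suc m) \<subseteq> (\<lambda>(xs, y). xs @ [y]) ` (paths n m \<times> {..<n})"
  proof
    fix zs assume z: "zs \<in> paths n (Suc m)"
    then have "zs \<noteq> []" by (auto simp: paths_def)
    then have "zs = butlast zs @ [last zs]" by simp
    moreover have "butlast zs \<in> paths n m" "last zs < n"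
      using z \<open>zs \<noteq> []\<close> by (auto simp: paths_def dest: in_set_butlastD) (metis last_in_set lessThan_iff subsetD)
    ultimately show "zs \<in> (\<lambda>(xs, y). xs @ [y]) ` (paths n m \<times> {..<n})"
      by (metis (no_types, lifting) SigmaI lessThan_iff pair_imageI)
  qed
qed (auto simp: paths_def)

lemma path_prob_nonneg: "(\<And>x y. 0 \<le> P x y) \<Longrightarrow> 0 \<le> path_prob P u xs"
  by (auto simp: path_prob_def intro!: prod_nonneg)

lemma path_prob_single: "path_prob P u [x] = (if u = x then 1 else 0)"
  by (auto simp: path_prob_def)

lemma path_prob_snoc:
  assumes "xs \<in> paths n m"
  shows "path_prob P u (xs @ [y]) = path_prob P u xs * P (xs ! m) y"
proof -
  have l: "length xs = Suc m" using assms by (simp add: paths_def)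
  have "(\<Prod>i<Suc m. P ((xs @ [y]) ! i) ((xs @ [y]) ! Suc i))
      = (\<Prod>i<m. P ((xs @ [y]) ! i) ((xs @ [y]) ! Suc i)) * P ((xs @ [y]) ! m) ((xs @ [y]) ! Suc m)"
    by simp
  also have "(\<Prod>i<m. P ((xs @ [y]) ! i) ((xs @ [y]) ! Suc i)) = (\<Prod>i<m. P (xs ! i) (xs ! Suc i))"
    using l by (intro prod.cong refl) (simp add: nth_append)
  finally show ?thesis using l by (simp add: path_prob_def nth_append)
qed

lemma path_sum_Suc:
  "(\<Sum>xs\<in>paths n (Suc m). path_prob P u xs * F xs)
    = (\<Sum>xs\<in>paths n m. path_prob P u xs * (\<Sum>y<n. P (xs ! m) y * F (xs @ [y])))"
proof -
  have "(\<Sum>xs\<in>paths n (Suc m). path_prob P u xs * F xs)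
      = (\<Sum>(xs, y)\<in>paths n m \<times> {..<n}. path_prob P u (xs @ [y]) * F (xs @ [y]))"
    unfolding paths_Suc by (subst sum.reindex) (auto simp: inj_on_def case_prod_beta)
  also have "\<dots> = (\<Sum>xs\<in>paths n m. \<Sum>y<n. path_prob P u (xs @ [y]) * F (xs @ [y]))"
    by (rule sum.cartesian_product[symmetric])
  also have "\<dots> = (\<Sum>xs\<in>paths n m. path_prob P u xs * (\<Sum>y<n. P (xs ! m) y * F (xs @ [y])))"
    by (intro sum.cong refl) (simp add: path_prob_snoc sum_distrib_left mult.assoc)
  finally show ?thesis .
qed

context sym_stochastic
begin

lemma path_sum_markov:
  "(\<Sum>xs\<in>paths n (m + j). path_prob P u xs * F (take (Suc m) xs) (xs ! (m + j)))
    = (\<Sum>xs\<in>paths n m. path_prob P u xs * (\<Sum>z<n. p j (xs ! m) z * F xs z))"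
proof (induction j arbitrary: F)
  case 0
  have "F (take (Suc m) xs) (xs ! m) = (\<Sum>z<n. p 0 (xs ! m) z * F xs z)" if xs: "xs \<in> paths n m" for xs
  proof -
    have "take (Suc m) xs = xs" using xs by (simp add: paths_def)
    then show ?thesis using sum_delta_mult[of "{..<n}" "xs ! m" "F xs"] paths_nth[OF xs order.refl] by simp
  qed
  then show ?case by (intro sum.cong) auto
next
  case (Suc j)
  have "(\<Sum>xs\<in>paths n (m + Suc j). path_prob P u xs * F (take (Suc m) xs) (xs ! (m + Suc j)))
      = (\<Sum>xs\<in>paths n (m + j). path_prob P u xs * (\<Sum>y<n. P (xs ! (m + j)) y * F (take (Suc m) xs) y))"
    unfolding add_Suc_right path_sum_Suc
    by (intro sum.cong refl) (auto simp: paths_def nth_append)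
  also have "\<dots> = (\<Sum>xs\<in>paths n m. path_prob P u xs * (\<Sum>z<n. p j (xs ! m) z * (\<Sum>y<n. P z y * F xs y)))"
    by (rule Suc.IH)
  also have "\<dots> = (\<Sum>xs\<in>paths n m. path_prob P u xs * (\<Sum>y<n. p (Suc j) (xs ! m) y * F xs y))"
  proof (rule sum.cong[OF refl])
    fix xs
    have "(\<Sum>z<n. p j (xs ! m) z * (\<Sum>y<n. P z y * F xs y)) = (\<Sum>z<n. \<Sum>y<n. p j (xs ! m) z * P z y * F xs y)"
      by (simp add: sum_distrib_left mult.assoc)
    also have "\<dots> = (\<Sum>y<n. \<Sum>z<n. p j (xs ! m) z * P z y * F xs y)" by (rule sum.swap)
    also have "\<dots> = (\<Sum>y<n. p (Suc j) (xs ! m) y * F xs y)" by (simp add: sum_distrib_right)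
    finally show "path_prob P u xs * (\<Sum>z<n. p j (xs ! m) z * (\<Sum>y<n. P z y * F xs y))
        = path_prob P u xs * (\<Sum>y<n. p (Suc j) (xs ! m) y * F xs y)" by simp
  qed
  finally show ?case .
qed

lemma path_sum_prefix:
  assumes "t \<le> m"
  shows "(\<Sum>xs\<in>paths n m. path_prob P u xs * F (take (Suc t) xs)) = (\<Sum>xs\<in>paths n t. path_prob P u xs * F xs)"
proof -
  have "(\<Sum>xs\<in>paths n m. path_prob P u xs * F (take (Suc t) xs))
      = (\<Sum>xs\<in>paths n (t + (m - t)). path_prob P u xs * (\<lambda>ys z. F ys) (take (Suc t) xs) (xs ! (t + (m - t))))"
    using assms by simp
  also have "\<dots> = (\<Sum>xs\<in>paths n t. path_prob P u xs * (\<Sum>z<n. p (m - t) (xs ! t) z * F xs))"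
    by (rule path_sum_markov)
  also have "\<dots> = (\<Sum>xs\<in>paths n t. path_prob P u xs * F xs)"
    by (intro sum.cong refl) (simp add: paths_nth p_row flip: sum_distrib_right)
  finally show ?thesis .
qed

lemma path_sum_time:
  assumes "u < n" and "t \<le> m"
  shows "(\<Sum>xs\<in>paths n m. path_prob P u xs * h (xs ! t)) = (\<Sum>z<n. p t u z * h z)"
proof -
  have "(\<Sum>xs\<in>paths n m. path_prob P u xs * h (xs ! t))
      = (\<Sum>xs\<in>paths n m. path_prob P u xs * (\<lambda>ys. h (ys ! t)) (take (Suc t) xs))"
    by simp
  also have "\<dots> = (\<Sum>xs\<in>paths n (0 + t). path_prob P u xs * (\<lambda>ys z. h z) (take (Suc 0) xs) (xs ! (0 + t)))"
    using path_sum_prefix[OF assms(2), of u "\<lambda>ys. h (ys ! t)"] by simp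
  also have "\<dots> = (\<Sum>xs\<in>paths n 0. path_prob P u xs * (\<Sum>z<n. p t (xs ! 0) z * h z))"
    by (rule path_sum_markov)
  also have "\<dots> = (\<Sum>z<n. p t u z * h z)"
    unfolding paths_0 using assms(1)
    by (subst sum.reindex) (auto simp: inj_on_def path_prob_single sum_delta_mult)
  finally show ?thesis .
qed

lemma path_sum_two_times:
  assumes u: "u < n" and st: "s \<le> t" "t \<le> m"
  shows "(\<Sum>xs\<in>paths n m. path_prob P u xs * \<phi> (xs ! s) (xs ! t))
    = (\<Sum>w<n. \<Sum>z<n. p s u w * p (t - s) w z * \<phi> w z)"
proof -
  have "(\<Sum>xs\<in>paths n m. path_prob P u xs * \<phi> (xs ! s) (xs ! t))
      = (\<Sum>xs\<in>paths n m. path_prob P u xs * (\<lambda>ys. \<phi> (ys ! s) (ys ! t)) (take (Suc t) xs))"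
    using st by simp
  also have "\<dots> = (\<Sum>xs\<in>paths n (s + (t - s)). path_prob P u xs
      * (\<lambda>ys z. \<phi> (ys ! s) z) (take (Suc s) xs) (xs ! (s + (t - s))))"
    using path_sum_prefix[OF st(2), of u "\<lambda>ys. \<phi> (ys ! s) (ys ! t)"] st(1) by simp
  also have "\<dots> = (\<Sum>xs\<in>paths n s. path_prob P u xs * (\<Sum>z<n. p (t - s) (xs ! s) z * \<phi> (xs ! s) z))"
    by (rule path_sum_markov)
  also have "\<dots> = (\<Sum>w<n. p s u w * (\<Sum>z<n. p (t - s) w z * \<phi> w z))"
    by (rule path_sum_time[OF u order.refl])
  also have "\<dots> = (\<Sum>w<n. \<Sum>z<n. p s u w * p (t - s) w z * \<phi> w z)"
    by (simp add: sum_distrib_left mult.assoc)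
  finally show ?thesis .
qed

end

section \<open>The walk on G seen on paths inside G_n\<close>

definition visit_count :: "nat \<Rightarrow> nat \<Rightarrow> nat list \<Rightarrow> nat" where
  "visit_count v k xs = card {i. i < k \<and> xs ! i = v}"

lemma visit_count_snoc:
  assumes "length xs = Suc k"
  shows "visit_count v (Suc k) (xs @ [y]) = visit_count v k xs + (if xs ! k = v then 1 else 0)"
proof -
  have "{i. i < Suc k \<and> (xs @ [y]) ! i = v} = {i. i < k \<and> xs ! i = v} \<union> (if xs ! k = v then {k} else {})"
    using assms by (auto simp: nth_append less_Suc_eq)
  then show ?thesis by (auto simp: visit_count_def)
qed

lemma walk_step_prob:
  assumes reg: "regular_graph n d E" and d: "0 < d" and v: "v < n" and x: "x < n" and y: "y < n"
  shows "pmf (pmf_of_set {y. adjG n E v x y}) y = srw d E x y * (if x = v then real d / (d + 1) else 1)"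
proof -
  have nbrs: "{y. adjG n E v x y} = {y. y < n \<and> E x y} \<union> (if x = v then {n} else {})"
    using x v by (auto simp: adjG_def)
  have cE: "card {y. y < n \<and> E x y} = d" using reg x by (auto simp: regular_graph_def)
  have card: "card {y. adjG n E v x y} = d + (if x = v then 1 else 0)"
    unfolding nbrs using cE by (auto simp: card_insert_if)
  have fin: "finite {y. adjG n E v x y}" unfolding nbrs by simp
  have ne: "{y. adjG n E v x y} \<noteq> {}" using card d by (metis card.empty add_is_0 not_gr0)
  have "adjG n E v x y \<longleftrightarrow> E x y" using x y by (auto simp: adjG_def)
  then show ?thesis using fin ne card d by (simp add: srw_def indicator_def)
qed

lemma walk_pmf:
  assumes reg: "regular_graph n d E" and d: "0 < d" and v: "v < n"
  shows "xs \<in> paths n k \<Longrightarrow>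
    pmf (walk (adjG n E v) u k) xs = path_prob (srw d E) u xs * (real d / (d + 1)) ^ visit_count v k xs"
proof (induction k arbitrary: xs)
  case 0
  then obtain x where x: "xs = [x]" unfolding paths_0 by auto
  show ?case by (auto simp: x path_prob_def visit_count_def indicator_def)
next
  case (Suc k)
  then obtain ys y where zs: "xs = ys @ [y]" and ys: "ys \<in> paths n k" and y: "y < n"
    unfolding paths_Suc by auto
  have l: "length ys = Suc k" using ys by (simp add: paths_def)
  then have lst: "last ys = ys ! k" by (metis last_conv_nth length_0_conv nat.distinct(1) diff_Suc_1)
  let ?S = "\<lambda>m. pmf_of_set {y. adjG n E v (last m) y}"
  have "pmf (walk (adjG n E v) u (Suc k)) xs
      = (\<integral>m. pmf (map_pmf (\<lambda>y. m @ [y]) (?S m)) xs \<partial>measure_pmf (walk (adjG n E v) u k))"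
    by (simp add: pmf_bind)
  also have "\<dots> = (\<integral>m. indicator {ys} m * pmf (?S ys) y \<partial>measure_pmf (walk (adjG n E v) u k))"
  proof (intro Bochner_Integration.integral_cong refl)
    fix m
    have "(\<lambda>y'. m @ [y']) -` {xs} = (if m = ys then {y} else {})" by (auto simp: zs)
    then show "pmf (map_pmf (\<lambda>y. m @ [y]) (?S m)) xs = indicator {ys} m * pmf (?S ys) y"
      by (simp add: pmf_map measure_pmf_single)
  qed
  also have "\<dots> = pmf (walk (adjG n E v) u k) ys * pmf (?S ys) y" by (simp add: measure_pmf_single)
  also have "pmf (?S ys) y = srw d E (ys ! k) y * (if ys ! k = v then real d / (d + 1) else 1)"
    unfolding lst by (rule walk_step_prob[OF reg d v paths_nth[OF ys order.refl] y])
  finally show ?case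
    by (simp add: Suc.IH[OF ys] zs path_prob_snoc[OF ys] visit_count_snoc[OF l] power_add)
qed

text \<open>A collision at some time of the window {T..n} between two walks that stay
  in G_n belongs to the meeting event, since such walks never visit n.\<close>

lemma meet_prob_lower:
  assumes reg: "regular_graph n d E" and d: "0 < d" and v: "v < n"
  shows "(\<Sum>xs\<in>paths n n. \<Sum>ys\<in>paths n n.
      (path_prob (srw d E) u1 xs * (real d / (d + 1)) ^ visit_count v n xs)
      * (path_prob (srw d E) u2 ys * (real d / (d + 1)) ^ visit_count v n ys)
      * (if \<exists>t\<in>{T..n}. xs ! t = ys ! t then 1 else 0))
    \<le> meet_prob n E v u1 u2"
proof -
  let ?M = "pair_pmf (walk (adjG n E v) u1 n) (walk (adjG n E v) u2 n)"
  define G where "G = {q \<in> paths n n \<times> paths n n. \<exists>t\<in>{T..n}. fst q ! t = snd q ! t}"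
  have "G \<subseteq> meet_event n n"
  proof
    fix q assume "q \<in> G"
    then obtain xs ys t where q: "q = (xs, ys)" and t: "t \<in> {T..n}" "xs ! t = ys ! t"
      and xs: "xs \<in> paths n n" and ys: "ys \<in> paths n n"
      unfolding G_def by auto
    have "xs ! s \<noteq> n" "ys ! s \<noteq> n" if "s < t" for s
      using paths_nth[OF xs, of s] paths_nth[OF ys, of s] that t by auto
    then show "q \<in> meet_event n n" unfolding q meet_event_def using t by auto
  qed
  then have "measure ?M G \<le> meet_prob n E v u1 u2"
    unfolding meet_prob_def by (intro measure_pmf.finite_measure_mono) auto
  moreover have "measure ?M G = (\<Sum>q\<in>G. pmf ?M q)"
    by (rule measure_measure_pmf_finite) (simp add: G_def finite_paths)
  moreover have "\<dots> = (\<Sum>q\<in>paths n n \<times> paths n n. if \<exists>t\<in>{T..n}. fst q ! t = snd q ! t then pmf ?M q else 0)"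
    unfolding G_def by (rule sum.inter_filter) (simp add: finite_paths)
  moreover have "\<dots> = (\<Sum>xs\<in>paths n n. \<Sum>ys\<in>paths n n. if \<exists>t\<in>{T..n}. xs ! t = ys ! t then pmf ?M (xs, ys) else 0)"
    by (subst sum.cartesian_product) (rule sum.cong, auto simp: case_prod_beta)
  moreover have "\<dots> = (\<Sum>xs\<in>paths n n. \<Sum>ys\<in>paths n n.
      (path_prob (srw d E) u1 xs * (real d / (d + 1)) ^ visit_count v n xs)
      * (path_prob (srw d E) u2 ys * (real d / (d + 1)) ^ visit_count v n ys)
      * (if \<exists>t\<in>{T..n}. xs ! t = ys ! t then 1 else 0))"
    by (intro sum.cong refl) (simp add: pmf_pair walk_pmf[OF reg d v])
  ultimately show ?thesis by linarith
qed

section \<open>Expectations for two independent walks on G_n\<close>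

locale mixing_kernel = sym_stochastic +
  fixes \<rho> :: real
  assumes rho_nonneg: "0 \<le> \<rho>" and rho_less_1: "\<rho> < 1"
    and mixing: "\<And>k x y. x < n \<Longrightarrow> y < n \<Longrightarrow> 1 \<le> k \<Longrightarrow> \<bar>p k x y - 1 / n\<bar> \<le> \<rho> ^ k"
begin

lemma p_upper: "x < n \<Longrightarrow> y < n \<Longrightarrow> p k x y \<le> 1 / n + \<rho> ^ k"
  using mixing[of x y k] by (cases "k = 0") auto

lemma path_prob_P_nonneg: "0 \<le> path_prob P u xs"
  by (rule path_prob_nonneg[OF P_nonneg])

definition pair_exp :: "nat \<Rightarrow> nat \<Rightarrow> (nat list \<Rightarrow> nat list \<Rightarrow> real) \<Rightarrow> real" where
  "pair_exp a b F = (\<Sum>xs\<in>paths n n. path_prob P a xs * (\<Sum>ys\<in>paths n n. path_prob P b ys * F xs ys))"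

lemma pair_exp_product:
  "pair_exp a b F = (\<Sum>q\<in>paths n n \<times> paths n n. (path_prob P a (fst q) * path_prob P b (snd q)) * F (fst q) (snd q))"
proof -
  have "pair_exp a b F = (\<Sum>xs\<in>paths n n. \<Sum>ys\<in>paths n n. (path_prob P a xs * path_prob P b ys) * F xs ys)"
    unfolding pair_exp_def by (simp add: sum_distrib_left mult.assoc)
  also have "\<dots> = (\<Sum>q\<in>paths n n \<times> paths n n. (path_prob P a (fst q) * path_prob P b (snd q)) * F (fst q) (snd q))"
    by (subst sum.cartesian_product) (rule sum.cong, auto simp: case_prod_beta)
  finally show ?thesis .
qed

lemma pair_exp_nonneg:
  "(\<And>xs ys. xs \<in> paths n n \<Longrightarrow> ys \<in> paths n n \<Longrightarrow> 0 \<le> F xs ys) \<Longrightarrow> 0 \<le> pair_exp a b F"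
  unfolding pair_exp_def using path_prob_P_nonneg by (intro sum_nonneg mult_nonneg_nonneg) auto

lemma pair_exp_add: "pair_exp a b (\<lambda>xs ys. F xs ys + G xs ys) = pair_exp a b F + pair_exp a b G"
  unfolding pair_exp_def by (simp add: algebra_simps sum.distrib)

lemma pair_exp_sum: "pair_exp a b (\<lambda>xs ys. \<Sum>t\<in>A. F t xs ys) = (\<Sum>t\<in>A. pair_exp a b (F t))"
  unfolding pair_exp_product by (simp add: sum_distrib_left sum.swap[of _ A])

lemma pair_exp_swap: "pair_exp a b F = pair_exp b a (\<lambda>ys xs. F xs ys)"
proof -
  have "pair_exp a b F = (\<Sum>xs\<in>paths n n. \<Sum>ys\<in>paths n n. path_prob P a xs * (path_prob P b ys * F xs ys))"
    unfolding pair_exp_def by (simp add: sum_distrib_left)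
  also have "\<dots> = (\<Sum>ys\<in>paths n n. \<Sum>xs\<in>paths n n. path_prob P a xs * (path_prob P b ys * F xs ys))"
    by (rule sum.swap)
  also have "\<dots> = pair_exp b a (\<lambda>ys xs. F xs ys)"
    unfolding pair_exp_def by (simp add: sum_distrib_left algebra_simps)
  finally show ?thesis .
qed

definition meets :: "nat \<Rightarrow> nat list \<Rightarrow> nat list \<Rightarrow> real" where
  "meets t xs ys = (if xs ! t = ys ! t then 1 else 0)"

lemma meets_nonneg: "0 \<le> meets t xs ys"
  by (simp add: meets_def)

lemma sum_meets_given_first:
  assumes b: "b < n" and xs: "xs \<in> paths n n" and t: "t \<le> n"
  shows "(\<Sum>ys\<in>paths n n. path_prob P b ys * (c * meets t xs ys)) = c * p t b (xs ! t)"
proof -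
  have "(\<Sum>ys\<in>paths n n. path_prob P b ys * (c * meets t xs ys))
      = c * (\<Sum>ys\<in>paths n n. path_prob P b ys * (if xs ! t = ys ! t then 1 else 0))"
    unfolding meets_def by (simp add: sum_distrib_left mult.left_commute)
  also have "\<dots> = c * (\<Sum>z<n. p t b z * (if xs ! t = z then 1 else 0))"
    using path_sum_time[OF b t, of "\<lambda>z. if xs ! t = z then 1 else 0"] by simp
  also have "(\<Sum>z<n. p t b z * (if xs ! t = z then 1 else 0)) = (\<Sum>z<n. p t b z * (if z = xs ! t then 1 else 0))"
    by (intro sum.cong refl) auto
  also have "\<dots> = p t b (xs ! t)"
    using paths_nth[OF xs t] by (intro sum_mult_delta) auto
  finally show ?thesis .
qed

lemma sum_meets_twice_given_first:
  assumes b: "b < n" and xs: "xs \<in> paths n n" and st: "s \<le> t" "t \<le> n"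
  shows "(\<Sum>ys\<in>paths n n. path_prob P b ys * (meets s xs ys * meets t xs ys))
    = p s b (xs ! s) * p (t - s) (xs ! s) (xs ! t)"
proof -
  have x: "xs ! s < n" "xs ! t < n" using paths_nth[OF xs] st by auto
  have "(\<Sum>ys\<in>paths n n. path_prob P b ys * (meets s xs ys * meets t xs ys))
      = (\<Sum>ys\<in>paths n n. path_prob P b ys
          * (\<lambda>w z. (if w = xs ! s then 1 else 0) * (if z = xs ! t then 1 else 0)) (ys ! s) (ys ! t))"
    by (intro sum.cong refl) (auto simp: meets_def)
  also have "\<dots> = (\<Sum>w<n. \<Sum>z<n. p s b w * p (t - s) w z
      * ((if w = xs ! s then 1 else 0) * (if z = xs ! t then 1 else 0)))"
    by (rule path_sum_two_times[OF b st(1) st(2)])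
  also have "\<dots> = (\<Sum>w<n. \<Sum>z<n. (p s b w * p (t - s) w z * (if z = xs ! t then 1 else 0))
      * (if w = xs ! s then 1 else 0))"
    by (simp add: algebra_simps)
  also have "\<dots> = (\<Sum>z<n. p s b (xs ! s) * p (t - s) (xs ! s) z * (if z = xs ! t then 1 else 0))"
    using x by (intro sum_sum_mult_delta) auto
  also have "\<dots> = p s b (xs ! s) * p (t - s) (xs ! s) (xs ! t)"
    using x by (intro sum_mult_delta) auto
  finally show ?thesis .
qed

lemma pair_exp_meets:
  assumes a: "a < n" and b: "b < n" and t: "t \<le> n"
  shows "pair_exp a b (meets t) = (\<Sum>w<n. p t a w * p t b w)" and "pair_exp a b (meets t) = p (2 * t) a b"
proof -
  have "pair_exp a b (meets t) = (\<Sum>xs\<in>paths n n. path_prob P a xs * p t b (xs ! t))"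
    unfolding pair_exp_def using sum_meets_given_first[OF b _ t, of _ 1] by simp
  also have "\<dots> = (\<Sum>w<n. p t a w * p t b w)" by (rule path_sum_time[OF a t])
  finally show "pair_exp a b (meets t) = (\<Sum>w<n. p t a w * p t b w)" .
  also have "\<dots> = (\<Sum>w<n. p t a w * p t w b)" using b by (intro sum.cong refl) (metis lessThan_iff p_sym)
  also have "\<dots> = p (t + t) a b" by (rule p_add[OF a b, symmetric])
  finally show "pair_exp a b (meets t) = p (2 * t) a b" by (simp add: mult_2)
qed

end

section \<open>Moments of the number of collisions in a late window\<close>

text \<open>Collisions are counted in the window {T..n}, where T is late enough that
  rho^T \<le> 1/(2n), and the window covers at least half of the times.\<close>

locale collision_window = mixing_kernel +
  fixes v T :: nat
  assumes v: "v < n" and T_pos: "1 \<le> T" and T_le: "T \<le> n"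
    and rho_T: "\<rho> ^ T \<le> 1 / (2 * n)"
    and n_ge_2: "2 \<le> n" and window_large: "n \<le> 2 * (n + 1 - T)"
begin

definition at_v :: "nat \<Rightarrow> nat list \<Rightarrow> real" where
  "at_v i xs = (if xs ! i = v then 1 else 0)"

definition collisions :: "nat list \<Rightarrow> nat list \<Rightarrow> real" where
  "collisions xs ys = (\<Sum>t\<in>{T..n}. meets t xs ys)"

definition visits :: "nat list \<Rightarrow> real" where
  "visits xs = (\<Sum>i<n. at_v i xs)"

abbreviation "K \<equiv> 1 / (1 - \<rho>)"

lemma K_nonneg: "0 \<le> K" using rho_less_1 by simp

lemma n_pos: "0 < real n" using n_ge_2 by simp

lemma rho_pow_late: "T \<le> k \<Longrightarrow> \<rho> ^ k \<le> 1 / (2 * n)"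
  using power_decreasing[of T k \<rho>] rho_nonneg rho_less_1 rho_T by simp

lemma p_late_upper: "T \<le> k \<Longrightarrow> x < n \<Longrightarrow> y < n \<Longrightarrow> p k x y \<le> 2 / n"
  using p_upper[of x y k] rho_pow_late[of k] n_pos by (simp add: field_simps)

lemma window_card:
  "real (card {T..n}) * (2 / n) \<le> 3" "real (card {T..n}) * (1 / n) \<le> 2"
  "1 / 4 \<le> real (card {T..n}) * (1 / (2 * n))"
proof -
  have c: "real (card {T..n}) \<le> n + 1" by simp
  have "real (card {T..n}) * (2 / n) \<le> (n + 1) * (2 / n)" using c n_pos by (intro mult_right_mono) auto
  also have "\<dots> \<le> 3" using n_ge_2 n_pos by (simp add: field_simps)
  finally show "real (card {T..n}) * (2 / n) \<le> 3" .
  have "real (card {T..n}) * (1 / n) \<le> (n + 1) * (1 / n)" using c n_pos by (intro mult_right_mono) auto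
  also have "\<dots> \<le> 2" using n_ge_2 n_pos by (simp add: field_simps)
  finally show "real (card {T..n}) * (1 / n) \<le> 2" .
  have "card {T..n} = n + 1 - T" by simp
  then have "real n \<le> 2 * real (card {T..n})"
    using window_large by (metis of_nat_le_iff of_nat_mult of_nat_numeral)
  then show "1 / 4 \<le> real (card {T..n}) * (1 / (2 * n))" using n_pos by (simp add: field_simps)
qed

lemma meets_late:
  assumes a: "a < n" and b: "b < n" and t: "T \<le> t" "t \<le> n"
  shows "1 / (2 * n) \<le> pair_exp a b (meets t)" and "pair_exp a b (meets t) \<le> 2 / n"
proof -
  have "\<bar>p (2 * t) a b - 1 / n\<bar> \<le> 1 / (2 * n)"
    using mixing[OF a b, of "2 * t"] rho_pow_late[of "2 * t"] T_pos t by auto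
  then have lo: "1 / n - 1 / (2 * n) \<le> p (2 * t) a b" and hi: "p (2 * t) a b \<le> 1 / n + 1 / (2 * n)"
    by (auto simp: abs_le_iff)
  have "1 / n - 1 / (2 * n) = 1 / (2 * real n)" "1 / n + 1 / (2 * n) \<le> 2 / real n"
    using n_pos by (simp_all add: field_simps)
  then show "1 / (2 * n) \<le> pair_exp a b (meets t)" and "pair_exp a b (meets t) \<le> 2 / n"
    using lo hi pair_exp_meets(2)[OF a b t(2)] by simp_all
qed

lemma meets_twice:
  assumes a: "a < n" and b: "b < n" and st: "T \<le> s" "s \<le> t" "t \<le> n"
  shows "pair_exp a b (\<lambda>xs ys. meets s xs ys * meets t xs ys) \<le> (2 / n) * (1 / n + \<rho> ^ (t - s))"
proof -
  let ?c = "1 / real n + \<rho> ^ (t - s)"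
  have "pair_exp a b (\<lambda>xs ys. meets s xs ys * meets t xs ys)
      = (\<Sum>xs\<in>paths n n. path_prob P a xs * (\<lambda>w z. p s b w * p (t - s) w z) (xs ! s) (xs ! t))"
    unfolding pair_exp_def using st by (intro sum.cong refl) (simp add: sum_meets_twice_given_first[OF b])
  also have "\<dots> = (\<Sum>w<n. \<Sum>z<n. p s a w * p (t - s) w z * (p s b w * p (t - s) w z))"
    by (rule path_sum_two_times[OF a st(2) st(3)])
  also have "\<dots> \<le> (\<Sum>w<n. \<Sum>z<n. (p s a w * p s b w * ?c) * p (t - s) w z)"
  proof (intro sum_mono)
    fix w z assume "w \<in> {..<n}" "z \<in> {..<n}"
    then have "p (t - s) w z \<le> ?c" by (intro p_upper) auto
    then have "(p s a w * p s b w * p (t - s) w z) * p (t - s) w z \<le> (p s a w * p s b w * ?c) * p (t - s) w z"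
      by (intro mult_right_mono mult_left_mono mult_nonneg_nonneg p_nonneg)
    then show "p s a w * p (t - s) w z * (p s b w * p (t - s) w z) \<le> (p s a w * p s b w * ?c) * p (t - s) w z"
      by (simp add: algebra_simps)
  qed
  also have "\<dots> = (\<Sum>w<n. p s a w * p s b w) * ?c"
    by (simp add: p_row sum_distrib_left[symmetric] sum_distrib_right)
  also have "(\<Sum>w<n. p s a w * p s b w) = pair_exp a b (meets s)"
    using pair_exp_meets(1)[OF a b] st by simp
  also have "pair_exp a b (meets s) * ?c \<le> (2 / n) * ?c"
    using meets_late(2)[OF a b st(1)] st rho_nonneg by (intro mult_right_mono) auto
  finally show ?thesis .
qed

lemma meets_twice_gap:
  assumes a: "a < n" and b: "b < n" and st: "s \<in> {T..n}" "t \<in> {T..n}"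
  shows "pair_exp a b (\<lambda>xs ys. meets s xs ys * meets t xs ys) \<le> (2 / n) * (1 / n + \<rho> ^ time_gap s t)"
proof (cases "s \<le> t")
  case True
  then show ?thesis using meets_twice[OF a b] st by (simp add: time_gap_def)
next
  case False
  then show ?thesis using meets_twice[OF a b, of t s] st
    by (simp add: time_gap_def mult.commute[of "meets s _ _"])
qed

lemma visit_then_meet:
  assumes a: "a < n" and b: "b < n" and it: "i \<le> t" and t: "T \<le> t" "t \<le> n"
  shows "pair_exp a b (\<lambda>xs ys. at_v i xs * meets t xs ys) \<le> (2 / n) * p i a v"
proof -
  have "pair_exp a b (\<lambda>xs ys. at_v i xs * meets t xs ys)
      = (\<Sum>xs\<in>paths n n. path_prob P a xs * (\<lambda>w z. (if w = v then 1 else 0) * p t b z) (xs ! i) (xs ! t))"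
    unfolding pair_exp_def using sum_meets_given_first[OF b _ t(2)]
    by (intro sum.cong refl) (simp add: at_v_def)
  also have "\<dots> = (\<Sum>w<n. \<Sum>z<n. p i a w * p (t - i) w z * ((if w = v then 1 else 0) * p t b z))"
    by (rule path_sum_two_times[OF a it t(2)])
  also have "\<dots> = (\<Sum>w<n. \<Sum>z<n. (p i a w * p (t - i) w z * p t b z) * (if w = v then 1 else 0))"
    by (simp add: algebra_simps)
  also have "\<dots> = (\<Sum>z<n. p i a v * p (t - i) v z * p t b z)"
    using v by (intro sum_sum_mult_delta) auto
  also have "\<dots> \<le> (\<Sum>z<n. p i a v * p (t - i) v z * (2 / n))"
    using t b by (intro sum_mono mult_left_mono p_late_upper mult_nonneg_nonneg p_nonneg) auto
  also have "\<dots> = p i a v * (2 / n) * (\<Sum>z<n. p (t - i) v z)"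
    by (simp add: sum_distrib_left sum_divide_distrib mult.commute mult.left_commute)
  also have "\<dots> = (2 / n) * p i a v" using p_row[OF v] by simp
  finally show ?thesis .
qed

lemma meet_then_visit:
  assumes a: "a < n" and b: "b < n" and it: "t < i" "i \<le> n" and t: "T \<le> t"
  shows "pair_exp a b (\<lambda>xs ys. at_v i xs * meets t xs ys) \<le> pair_exp a b (meets t) * (1 / n + \<rho> ^ (i - t))"
proof -
  have tn: "t \<le> n" using it by simp
  have "pair_exp a b (\<lambda>xs ys. at_v i xs * meets t xs ys)
      = (\<Sum>xs\<in>paths n n. path_prob P a xs * (\<lambda>w z. p t b w * (if z = v then 1 else 0)) (xs ! t) (xs ! i))"
    unfolding pair_exp_def using sum_meets_given_first[OF b _ tn]
    by (intro sum.cong refl) (simp add: at_v_def)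
  also have "\<dots> = (\<Sum>w<n. \<Sum>z<n. p t a w * p (i - t) w z * (p t b w * (if z = v then 1 else 0)))"
    using it by (intro path_sum_two_times[OF a]) auto
  also have "\<dots> = (\<Sum>w<n. \<Sum>z<n. (p t a w * p t b w * p (i - t) w z) * (if z = v then 1 else 0))"
    by (simp add: algebra_simps)
  also have "\<dots> = (\<Sum>w<n. p t a w * p t b w * p (i - t) w v)"
    using v by (intro sum.cong refl sum_mult_delta) auto
  also have "\<dots> \<le> (\<Sum>w<n. p t a w * p t b w * (1 / n + \<rho> ^ (i - t)))"
    using v by (intro sum_mono mult_left_mono p_upper mult_nonneg_nonneg p_nonneg) auto
  also have "\<dots> = pair_exp a b (meets t) * (1 / n + \<rho> ^ (i - t))"
    using pair_exp_meets(1)[OF a b tn] by (simp add: sum_distrib_right)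
  finally show ?thesis .
qed

lemma visit_and_meet:
  assumes a: "a < n" and b: "b < n" and i: "i \<le> n" and t: "T \<le> t" "t \<le> n"
  shows "pair_exp a b (\<lambda>xs ys. at_v i xs * meets t xs ys)
    \<le> (2 / n) * p i a v + pair_exp a b (meets t) * (1 / n + \<rho> ^ time_gap t i)"
proof (cases "i \<le> t")
  case True
  have "0 \<le> pair_exp a b (meets t) * (1 / n + \<rho> ^ time_gap t i)"
    using rho_nonneg by (intro mult_nonneg_nonneg pair_exp_nonneg meets_nonneg) auto
  then show ?thesis using visit_then_meet[OF a b True t] by simp
next
  case False
  have "0 \<le> (2 / n) * p i a v" using n_pos by (simp add: p_nonneg)
  then show ?thesis using meet_then_visit[OF a b _ i t(1)] False by (simp add: time_gap_def)
qed

lemma collisions_sym: "collisions xs ys = collisions ys xs"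
  unfolding collisions_def meets_def by (intro sum.cong refl) auto

text \<open>First moment: E[Z] is between 1/4 and 3, since each of the at least n/2
  window times contributes about 1/n.\<close>

lemma collisions_mean:
  assumes a: "a < n" and b: "b < n"
  shows "1 / 4 \<le> pair_exp a b collisions" and "pair_exp a b collisions \<le> 3"
proof -
  have e: "pair_exp a b collisions = (\<Sum>t\<in>{T..n}. pair_exp a b (meets t))"
    unfolding collisions_def by (rule pair_exp_sum)
  have "(\<Sum>t\<in>{T..n}. 1 / (2 * n)) \<le> (\<Sum>t\<in>{T..n}. pair_exp a b (meets t))"
    using meets_late(1)[OF a b] by (intro sum_mono) auto
  moreover have "(\<Sum>t\<in>{T..n}. 1 / real (2 * n)) = real (card {T..n}) * (1 / real (2 * n))"
    by (simp only: sum_constant)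
  ultimately show "1 / 4 \<le> pair_exp a b collisions" using window_card(3) e by linarith
  have "(\<Sum>t\<in>{T..n}. pair_exp a b (meets t)) \<le> (\<Sum>t\<in>{T..n}. 2 / n)"
    using meets_late(2)[OF a b] by (intro sum_mono) auto
  moreover have "(\<Sum>t\<in>{T..n}. 2 / real n) = real (card {T..n}) * (2 / n)"
    by (simp only: sum_constant)
  ultimately show "pair_exp a b collisions \<le> 3" using window_card(1) e by linarith
qed

lemma window_gap_sum: "(\<Sum>t\<in>{T..n}. 1 / n + \<rho> ^ time_gap s t) \<le> 2 + 2 * K"
proof -
  have "(\<Sum>t\<in>{T..n}. 1 / n + \<rho> ^ time_gap s t) = real (card {T..n}) * (1 / n) + (\<Sum>t\<in>{T..n}. \<rho> ^ time_gap s t)"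
    by (simp only: sum.distrib sum_constant)
  moreover have "(\<Sum>t\<in>{T..n}. \<rho> ^ time_gap s t) \<le> 2 * K"
    using geometric_sum_time_gap[OF rho_nonneg rho_less_1, of "{T..n}" s] by simp
  ultimately show ?thesis using window_card(2) by linarith
qed

lemma gap_sum: "(\<Sum>i<n. 1 / n + \<rho> ^ time_gap t i) \<le> 1 + 2 * K"
proof -
  have "(\<Sum>i<n. 1 / n + \<rho> ^ time_gap t i) = 1 + (\<Sum>i<n. \<rho> ^ time_gap t i)"
    using n_pos by (simp add: sum.distrib)
  moreover have "(\<Sum>i<n. \<rho> ^ time_gap t i) \<le> 2 * K"
    using geometric_sum_time_gap[OF rho_nonneg rho_less_1, of "{..<n}" t] by simp
  ultimately show ?thesis by linarith
qed

lemma expected_visits: "a < n \<Longrightarrow> (\<Sum>i<n. p i a v) \<le> 1 + K"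
proof -
  assume a: "a < n"
  have "(\<Sum>i<n. p i a v) \<le> (\<Sum>i<n. 1 / n + \<rho> ^ i)" using a v by (intro sum_mono p_upper) auto
  also have "\<dots> = 1 + (\<Sum>i<n. \<rho> ^ i)" using n_pos by (simp add: sum.distrib)
  also have "(\<Sum>i<n. \<rho> ^ i) \<le> K" using geometric_sum_inj[OF rho_nonneg rho_less_1, of id "{..<n}"] by simp
  finally show ?thesis by simp
qed

text \<open>Second moment: E[Z^2] = O(K), since meetings at distant times are nearly
  independent.\<close>

lemma collisions_second_moment:
  assumes a: "a < n" and b: "b < n"
  shows "pair_exp a b (\<lambda>xs ys. (collisions xs ys)\<^sup>2) \<le> 6 + 6 * K"
proof -
  have sq: "(collisions xs ys)\<^sup>2 = (\<Sum>s\<in>{T..n}. \<Sum>t\<in>{T..n}. meets s xs ys * meets t xs ys)" for xs ys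
    unfolding collisions_def power2_eq_square by (rule sum_product)
  have "pair_exp a b (\<lambda>xs ys. (collisions xs ys)\<^sup>2)
      = (\<Sum>s\<in>{T..n}. \<Sum>t\<in>{T..n}. pair_exp a b (\<lambda>xs ys. meets s xs ys * meets t xs ys))"
    unfolding sq by (simp add: pair_exp_sum)
  also have "\<dots> \<le> (\<Sum>s\<in>{T..n}. \<Sum>t\<in>{T..n}. (2 / n) * (1 / n + \<rho> ^ time_gap s t))"
    using meets_twice_gap[OF a b] by (intro sum_mono) auto
  also have "\<dots> = (\<Sum>s\<in>{T..n}. (2 / n) * (\<Sum>t\<in>{T..n}. 1 / n + \<rho> ^ time_gap s t))"
    by (simp only: sum_distrib_left)
  also have "\<dots> \<le> (\<Sum>s\<in>{T..n}. (2 / n) * (2 + 2 * K))"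
    using window_gap_sum n_pos by (intro sum_mono mult_left_mono) auto
  also have "\<dots> = real (card {T..n}) * (2 / n) * (2 + 2 * K)" by simp
  also have "\<dots> \<le> 3 * (2 + 2 * K)"
    using window_card(1) K_nonneg by (intro mult_right_mono) auto
  finally show ?thesis by simp
qed

lemma visits_collisions:
  assumes a: "a < n" and b: "b < n"
  shows "pair_exp a b (\<lambda>xs ys. visits xs * collisions xs ys) \<le> 6 + 9 * K"
proof -
  have prod: "visits xs * collisions xs ys = (\<Sum>i<n. \<Sum>t\<in>{T..n}. at_v i xs * meets t xs ys)" for xs ys
    unfolding visits_def collisions_def by (rule sum_product)
  have visit_part: "(\<Sum>i<n. \<Sum>t\<in>{T..n}. (2 / n) * p i a v) \<le> 3 * (1 + K)"
  proof -
    have "(\<Sum>i<n. \<Sum>t\<in>{T..n}. (2 / n) * p i a v) = real (card {T..n}) * (2 / n) * (\<Sum>i<n. p i a v)"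
      by (simp only: sum_constant sum_distrib_left[symmetric] mult.assoc)
    also have "\<dots> \<le> 3 * (1 + K)"
      using window_card(1) expected_visits[OF a] by (intro mult_mono) (auto intro!: sum_nonneg p_nonneg)
    finally show ?thesis .
  qed
  have meet_part: "(\<Sum>i<n. \<Sum>t\<in>{T..n}. pair_exp a b (meets t) * (1 / n + \<rho> ^ time_gap t i))
      \<le> 3 * (1 + 2 * K)"
  proof -
    have "(\<Sum>i<n. \<Sum>t\<in>{T..n}. pair_exp a b (meets t) * (1 / n + \<rho> ^ time_gap t i))
        = (\<Sum>t\<in>{T..n}. pair_exp a b (meets t) * (\<Sum>i<n. 1 / n + \<rho> ^ time_gap t i))"
      by (subst sum.swap) (simp only: sum_distrib_left)
    also have "\<dots> \<le> (\<Sum>t\<in>{T..n}. pair_exp a b (meets t) * (1 + 2 * K))"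
      by (intro sum_mono mult_left_mono gap_sum pair_exp_nonneg meets_nonneg)
    also have "\<dots> = pair_exp a b collisions * (1 + 2 * K)"
      unfolding collisions_def pair_exp_sum by (simp add: sum_distrib_right)
    also have "\<dots> \<le> 3 * (1 + 2 * K)"
      using collisions_mean(2)[OF a b] K_nonneg by (intro mult_right_mono) auto
    finally show ?thesis .
  qed
  have "pair_exp a b (\<lambda>xs ys. visits xs * collisions xs ys)
      = (\<Sum>i<n. \<Sum>t\<in>{T..n}. pair_exp a b (\<lambda>xs ys. at_v i xs * meets t xs ys))"
    unfolding prod by (simp add: pair_exp_sum)
  also have "\<dots> \<le> (\<Sum>i<n. \<Sum>t\<in>{T..n}. (2 / n) * p i a v + pair_exp a b (meets t) * (1 / n + \<rho> ^ time_gap t i))"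
    using visit_and_meet[OF a b] by (intro sum_mono) auto
  also have "\<dots> = (\<Sum>i<n. \<Sum>t\<in>{T..n}. (2 / n) * p i a v)
      + (\<Sum>i<n. \<Sum>t\<in>{T..n}. pair_exp a b (meets t) * (1 / n + \<rho> ^ time_gap t i))"
    by (simp only: sum.distrib)
  also have "\<dots> \<le> 3 * (1 + K) + 3 * (1 + 2 * K)" using visit_part meet_part by (rule add_mono)
  also have "\<dots> = 6 + 9 * K" by (simp add: algebra_simps)
  finally show ?thesis .
qed

lemma visits_collisions_both:
  assumes a: "a < n" and b: "b < n"
  shows "pair_exp a b (\<lambda>xs ys. (visits xs + visits ys) * collisions xs ys) \<le> 12 + 18 * K"
proof -
  have "pair_exp a b (\<lambda>xs ys. (visits xs + visits ys) * collisions xs ys)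
      = pair_exp a b (\<lambda>xs ys. visits xs * collisions xs ys) + pair_exp a b (\<lambda>xs ys. visits ys * collisions xs ys)"
    by (simp add: distrib_right pair_exp_add)
  also have "pair_exp a b (\<lambda>xs ys. visits ys * collisions xs ys) = pair_exp b a (\<lambda>ys xs. visits ys * collisions ys xs)"
    by (subst pair_exp_swap) (simp add: collisions_sym)
  finally show ?thesis using visits_collisions[OF a b] visits_collisions[OF b a] by simp
qed

lemma visit_count_eq_visits: "real (visit_count v n xs) = visits xs"
proof -
  have "real (visit_count v n xs) = (\<Sum>i\<in>{i\<in>{..<n}. xs ! i = v}. 1)"
    unfolding visit_count_def by (simp add: conj_commute)
  also have "\<dots> = visits xs" unfolding visits_def at_v_def by (rule sum.inter_filter) simp
  finally show ?thesis .
qed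

lemma meet_in_window_iff: "(\<exists>t\<in>{T..n}. xs ! t = ys ! t) \<longleftrightarrow> 0 < collisions xs ys"
proof
  assume "\<exists>t\<in>{T..n}. xs ! t = ys ! t"
  then obtain t where t: "t \<in> {T..n}" "xs ! t = ys ! t" by blast
  have "meets t xs ys \<le> collisions xs ys"
    unfolding collisions_def using t by (intro member_le_sum meets_nonneg) auto
  then show "0 < collisions xs ys" using t by (simp add: meets_def)
next
  assume "0 < collisions xs ys"
  then obtain t where "t \<in> {T..n}" "meets t xs ys \<noteq> 0"
    unfolding collisions_def by (metis less_irrefl sum.neutral)
  then show "\<exists>t\<in>{T..n}. xs ! t = ys ! t" by (auto simp: meets_def split: if_splits)
qed

lemma discounted_collision_bound:
  assumes a: "a < n" and b: "b < n" and al: "0 < \<alpha>" "\<alpha> \<le> 1"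
  shows "((1 / 4) * \<alpha> powr ((12 + 18 * K) / (1 / 4)))\<^sup>2 / (6 + 6 * K)
    \<le> pair_exp a b (\<lambda>xs ys. \<alpha> powr (visits xs + visits ys) * (if 0 < collisions xs ys then 1 else 0))"
proof -
  define \<mu> where "\<mu> q = path_prob P a (fst q) * path_prob P b (snd q)" for q
  define Z where "Z q = collisions (fst q) (snd q)" for q
  define N where "N q = visits (fst q) + visits (snd q)" for q
  have E: "pair_exp a b F = (\<Sum>q\<in>paths n n \<times> paths n n. \<mu> q * F (fst q) (snd q))" for F
    unfolding \<mu>_def by (rule pair_exp_product)
  show ?thesis
    unfolding E mult.assoc[symmetric] N_def[symmetric] Z_def[symmetric]
  proof (rule weighted_paley_zygmund)
    show "0 \<le> \<mu> q" "0 \<le> Z q" "0 \<le> N q" for q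
      unfolding \<mu>_def Z_def N_def collisions_def visits_def at_v_def
      by (auto intro!: mult_nonneg_nonneg path_prob_P_nonneg sum_nonneg meets_nonneg add_nonneg_nonneg)
    show "1 / 4 \<le> (\<Sum>q\<in>paths n n \<times> paths n n. \<mu> q * Z q)"
      using collisions_mean(1)[OF a b] unfolding E Z_def .
    show "(\<Sum>q\<in>paths n n \<times> paths n n. \<mu> q * Z q * N q) \<le> 12 + 18 * K"
      using visits_collisions_both[OF a b] unfolding E Z_def N_def by (simp add: algebra_simps)
    show "(\<Sum>q\<in>paths n n \<times> paths n n. \<mu> q * (Z q)\<^sup>2) \<le> 6 + 6 * K"
      using collisions_second_moment[OF a b] unfolding E Z_def .
    show "0 < 6 + 6 * K" using K_nonneg by linarith
  qed (use al in auto)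
qed

lemma discounted_meeting_sum:
  assumes al: "0 < \<alpha>"
  shows "(\<Sum>xs\<in>paths n n. \<Sum>ys\<in>paths n n. (path_prob P a xs * \<alpha> ^ visit_count v n xs)
        * (path_prob P b ys * \<alpha> ^ visit_count v n ys) * (if \<exists>t\<in>{T..n}. xs ! t = ys ! t then 1 else 0))
    = pair_exp a b (\<lambda>xs ys. \<alpha> powr (visits xs + visits ys) * (if 0 < collisions xs ys then 1 else 0))"
  unfolding pair_exp_def meet_in_window_iff using al
  by (simp add: sum_distrib_left powr_add powr_realpow[symmetric] visit_count_eq_visits[symmetric] algebra_simps)

end

section \<open>The meeting lemma\<close>

text \<open>For rho < 1, eventually rho^(n div 2) \<le> 1/(2n), i.e. the window {n div 2..n}
  starts after the walks have mixed to precision 1/(2n).\<close>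

lemma eventually_mixed_by_half:
  fixes r :: real
  assumes r0: "0 \<le> r" and r1: "r < 1"
  shows "\<exists>N. \<forall>n\<ge>N. r ^ (n div 2) \<le> 1 / (2 * real n)"
proof (cases "r = 0")
  case True
  then show ?thesis by (intro exI[of _ 2]) (auto simp: power_0_left)
next
  case False
  define \<sigma> where "\<sigma> = sqrt r"
  have s0: "0 < \<sigma>" and s1: "\<sigma> < 1" using r0 r1 False by (auto simp: \<sigma>_def)
  have "(\<lambda>n. of_nat n * \<sigma> ^ n) \<longlonglongrightarrow> 0" using s0 s1 by (intro powser_times_n_limit_0) simp
  then have "eventually (\<lambda>n. of_nat n * \<sigma> ^ n < \<sigma> / 2) sequentially"
    using s0 by (intro order_tendstoD(2)) auto
  then obtain N where N: "\<And>n. n \<ge> N \<Longrightarrow> real n * \<sigma> ^ n < \<sigma> / 2"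
    unfolding eventually_sequentially by auto
  show ?thesis
  proof (intro exI allI impI)
    fix n :: nat assume n: "max N 1 \<le> n"
    have "r ^ (n div 2) = \<sigma> ^ (2 * (n div 2))" using r0 by (simp add: \<sigma>_def power_mult)
    also have "\<dots> \<le> \<sigma> ^ (n - 1)" using s0 s1 by (intro power_decreasing) auto
    finally have a: "r ^ (n div 2) \<le> \<sigma> ^ (n - 1)" .
    have "\<sigma> * (real n * \<sigma> ^ (n - 1)) < \<sigma> * (1 / 2)"
      using N[of n] n by (cases n) (auto simp: algebra_simps)
    then have "real n * \<sigma> ^ (n - 1) < 1 / 2" using s0 by (simp only: mult_less_cancel_left_pos)
    then have "\<sigma> ^ (n - 1) \<le> 1 / (2 * real n)" using n by (simp add: field_simps)
    with a show "r ^ (n div 2) \<le> 1 / (2 * real n)" by simp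
  qed
qed

lemma meet_prob_bound:
  fixes r :: real and d :: nat
  defines "K \<equiv> 1 / (1 - r)" and "\<alpha> \<equiv> real d / (d + 1)"
  assumes d: "0 < d" and r0: "0 \<le> r" and r1: "r < 1"
    and n: "2 \<le> n" and mixed: "r ^ (n div 2) \<le> 1 / (2 * real n)"
    and reg: "regular_graph n d E" and sb: "spectral_bound n d E r"
    and v: "v < n" and u1: "u1 < n" and u2: "u2 < n"
  shows "((1 / 4) * \<alpha> powr ((12 + 18 * K) / (1 / 4)))\<^sup>2 / (6 + 6 * K) \<le> meet_prob n E v u1 u2"
proof -
  have n0: "0 < n" using n by simp
  interpret sym_stochastic n "srw d E" by (rule srw_sym_stochastic[OF reg d n0])
  interpret collision_window n "srw d E" r v "n div 2"
  proof unfold_locales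
    show "\<bar>kernel_pow n (srw d E) k x y - 1 / n\<bar> \<le> r ^ k" if "x < n" "y < n" "1 \<le> k" for k x y
      using srw_close_to_uniform[OF reg d n0 sb r0] that by simp
    show "1 \<le> n div 2" using n by auto
  qed (use r0 r1 v n mixed in auto)
  have al: "0 < \<alpha>" "\<alpha> \<le> 1" using d by (auto simp: \<alpha>_def)
  show ?thesis
    using discounted_collision_bound[OF u1 u2 al] discounted_meeting_sum[OF al(1), of u1 u2]
      meet_prob_lower[OF reg d v, of u1 u2 "n div 2"]
    unfolding K_def \<alpha>_def by linarith
qed

theorem lemma3p4:
  fixes d :: nat and \<rho> :: real
  assumes "d \<ge> 3" and "\<rho> < 1"
  shows "\<exists>c>0. \<exists>N0. \<forall>n\<ge>N0. \<forall>E v u1 u2.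
           regular_graph n d E \<and> spectral_bound n d E \<rho> \<and> v < n \<and> u1 < n \<and> u2 < n
           \<longrightarrow> meet_prob n E v u1 u2 \<ge> c"
proof -
  define r where "r = max \<rho> 0"
  have r0: "0 \<le> r" and r1: "r < 1" and d: "0 < d" using assms by (auto simp: r_def)
  define \<alpha> :: real where "\<alpha> = real d / (d + 1)"
  define K where "K = 1 / (1 - r)"
  define c where "c = ((1 / 4) * \<alpha> powr ((12 + 18 * K) / (1 / 4)))\<^sup>2 / (6 + 6 * K)"
  have "0 < K" using r1 by (simp add: K_def)
  then have "0 < c" using d unfolding c_def \<alpha>_def by (intro divide_pos_pos) auto
  obtain N where N: "\<And>n. n \<ge> N \<Longrightarrow> r ^ (n div 2) \<le> 1 / (2 * real n)"
    using eventually_mixed_by_half[OF r0 r1] by blast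
  have "c \<le> meet_prob n E v u1 u2"
    if n: "max N 2 \<le> n" and sb: "spectral_bound n d E \<rho>"
      and H: "regular_graph n d E" "v < n" "u1 < n" "u2 < n" for n E v u1 u2
  proof -
    have sb_r: "spectral_bound n d E r"
      using sb unfolding spectral_bound_def r_def by (meson max.coboundedI1)
    have n2: "2 \<le> n" and mixed: "r ^ (n div 2) \<le> 1 / (2 * real n)" using n N[of n] by auto
    show ?thesis
      unfolding c_def K_def \<alpha>_def by (rule meet_prob_bound[OF d r0 r1 n2 mixed H(1) sb_r H(2-4)])
  qed
  with \<open>0 < c\<close> show ?thesis by blast
qed

end
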